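(* Let $p,q\ge0$, $n=p+q\ge1$, $N=2^{\lfloor (n+1)/2\rfloor}$, and let $M\in\mathcal{G}^{\mathbb{C}}_{p,q}$ be normal, i.e. $M^\dagger M=MM^\dagger$. Then ${\rm rank}(M)=N$ if $C_{(N)}(M)\ne0$; for $k\in\{2,\dots,N-1\}$, ${\rm rank}(M)=k$ if $C_{(j)}(M)=0$ for all $j=k+1,\dots,N$ and $C_{(k)}(M)\ne0$; ${\rm rank}(M)=1$ if $C_{(j)}(M)=0$ for all $j=2,\dots,N$ and $M\neq0$; ${\rm rank}(M)=0$ if $M=0$.
   Context: Let $\mathcal{G}_{p,q}$ be the real Clifford algebra with identity $e$ and generators $e_1,\dots,e_n$ satisfying $e_ae_b+e_be_a=2\eta_{ab}e$, $\eta={\rm diag}(1,\dots,1,-1,\dots,-1)$ ($p$ ones, $q$ minus ones), basis elements $e_A=e_{a_1}\cdots e_{a_k}$ for $a_1<\dots<a_k$, and $\mathcal{G}^{\mathbb{C}}_{p,q}=\mathbb{C}\otimes\mathcal{G}_{p,q}$ with elements $M=\sum_A m_Ae_A$, $m_A\in\mathbb{C}$. Hermitian conjugation: $M^\dagger=\sum_A\overline{m_A}(e_A)^{-1}$. Let $\langle M\rangle_0$ denote the coefficient of $e$. Let $\beta$ be an algebra isomorphism from $\mathcal{G}^{\mathbb{C}}_{p,q}$ onto ${\rm Mat}(N,\mathbb{C})$ if $n$ is even, and onto block-diagonal matrices ${\rm diag}(X,Y)$, $X,Y\in{\rm Mat}(N/2,\mathbb{C})$, if $n$ is odd. The rank is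 ${\rm rank}(M):={\rm rank}(\beta(M))$, independent of $\beta$. The characteristic polynomial coefficients $C_{(k)}(M)$ are defined by $\det(\lambda I_N-\beta(M))=\lambda^N-C_{(1)}(M)\lambda^{N-1}-\cdots-C_{(N)}(M)$ (independent of $\beta$); equivalently by the recursion $M_{(1)}=M$, $C_{(k)}=\frac{N}{k}\langle M_{(k)}\rangle_0$, $M_{(k+1)}=M(M_{(k)}-C_{(k)})$, $k=1,\dots,N$. *)

theory Defs
  imports Complex_Main "Jordan_Normal_Form.DL_Rank"
begin

text \<open>An element M = sum_A m_A e_A is represented by its coefficient function
  M :: nat set => complex, where the multi-index A ranges over subsets of the
  generator indices {1..n}; coefficients outside Pow {1..n} must vanish.\<close>

type_synonym cl = "nat set \<Rightarrow> complex"

definition cl_carrier :: "nat \<Rightarrow> nat \<Rightarrow> cl set" where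
  "cl_carrier p q = {X. \<forall>A. \<not> A \<subseteq> {1..p+q} \<longrightarrow> X A = 0}"

definition cl_eta :: "nat \<Rightarrow> nat \<Rightarrow> complex" where
  "cl_eta p a = (if a \<le> p then 1 else -1)"

text \<open>e_A e_B = blade_coeff A B * e_{A symmetric-difference B}
  (reorder generators, then use e_a e_a = eta_a e).\<close>
definition blade_coeff :: "nat \<Rightarrow> nat set \<Rightarrow> nat set \<Rightarrow> complex" where
  "blade_coeff p A B =
     (-1) ^ card {(a, b). a \<in> A \<and> b \<in> B \<and> b < a} * (\<Prod>a\<in>A \<inter> B. cl_eta p a)"

definition cl_mult :: "nat \<Rightarrow> nat \<Rightarrow> cl \<Rightarrow> cl \<Rightarrow> cl" where
  "cl_mult p q X Y = (\<lambda>C. \<Sum>A\<in>Pow {1..p+q}. \<Sum>B\<in>Pow {1..p+q}.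
      (if (A - B) \<union> (B - A) = C then X A * Y B * blade_coeff p A B else 0))"

definition cl_one :: cl where
  "cl_one = (\<lambda>A. if A = {} then 1 else 0)"

definition cl_scalar :: "cl \<Rightarrow> complex" where
  "cl_scalar X = X {}"

text \<open>Hermitian conjugation M^dagger = sum_A conj(m_A) (e_A)^{-1}.
  Since e_A e_A = blade_coeff A A e with blade_coeff A A = +-1,
  (e_A)^{-1} = blade_coeff A A e_A.\<close>
definition cl_dagger :: "nat \<Rightarrow> cl \<Rightarrow> cl" where
  "cl_dagger p X = (\<lambda>A. cnj (X A) * blade_coeff p A A)"

definition cl_normal :: "nat \<Rightarrow> nat \<Rightarrow> cl \<Rightarrow> bool" where
  "cl_normal p q X \<longleftrightarrow> cl_mult p q (cl_dagger p X) X = cl_mult p q X (cl_dagger p X)"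

definition cl_N :: "nat \<Rightarrow> nat \<Rightarrow> nat" where
  "cl_N p q = 2 ^ ((p + q + 1) div 2)"

text \<open>Recursion: M_(1) = M, C_(k) = N/k <M_(k)>_0, M_(k+1) = M (M_(k) - C_(k) e).
  cl_Mseq p q M k is M_(k+1).\<close>
primrec cl_Mseq :: "nat \<Rightarrow> nat \<Rightarrow> cl \<Rightarrow> nat \<Rightarrow> cl" where
  "cl_Mseq p q M 0 = M"
| "cl_Mseq p q M (Suc k) =
     cl_mult p q M (\<lambda>A. cl_Mseq p q M k A
        - (of_nat (cl_N p q) / of_nat (Suc k) * cl_scalar (cl_Mseq p q M k)) * cl_one A)"

definition cl_C :: "nat \<Rightarrow> nat \<Rightarrow> cl \<Rightarrow> nat \<Rightarrow> complex" where
  "cl_C p q M k = of_nat (cl_N p q) / of_nat k * cl_scalar (cl_Mseq p q M (k - 1))"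

text \<open>Target of beta: all N x N complex matrices if n even; block diagonal
  matrices diag(X,Y), X,Y of size N/2, if n odd.\<close>
definition cl_target :: "nat \<Rightarrow> nat \<Rightarrow> complex mat set" where
  "cl_target p q =
     (if even (p + q) then carrier_mat (cl_N p q) (cl_N p q)
      else {A \<in> carrier_mat (cl_N p q) (cl_N p q).
              \<forall>i<cl_N p q. \<forall>j<cl_N p q.
                (i < cl_N p q div 2) \<noteq> (j < cl_N p q div 2) \<longrightarrow> A $$ (i, j) = 0})"

definition cl_iso :: "nat \<Rightarrow> nat \<Rightarrow> (cl \<Rightarrow> complex mat) \<Rightarrow> bool" where
  "cl_iso p q \<beta> \<longleftrightarrow>
     bij_betw \<beta> (cl_carrier p q) (cl_target p q) \<and>
     (\<forall>X\<in>cl_carrier p q. \<forall>Y\<in>cl_carrier p q. \<beta> (\<lambda>A. X A + Y A) = \<beta> X + \<beta> Y) \<and>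
     (\<forall>c. \<forall>X\<in>cl_carrier p q. \<beta> (\<lambda>A. c * X A) = c \<cdot>\<^sub>m \<beta> X) \<and>
     (\<forall>X\<in>cl_carrier p q. \<forall>Y\<in>cl_carrier p q. \<beta> (cl_mult p q X Y) = \<beta> X * \<beta> Y) \<and>
     \<beta> cl_one = 1\<^sub>m (cl_N p q)"

definition cl_rank :: "nat \<Rightarrow> nat \<Rightarrow> (cl \<Rightarrow> complex mat) \<Rightarrow> cl \<Rightarrow> nat" where
  "cl_rank p q \<beta> M = vec_space.rank (cl_N p q) (\<beta> M)"

end

(*
  Under the isomorphism beta, the recursion defining C_(k) becomes the Faddeev-LeVerrier
  recursion for the matrix beta(M), because tr beta(X) = N <X>_0: a basis element e_A with A
  nonempty either anticommutes with some generator e_a, or (n odd, A = {1..n}) is central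
  without being scalar, and in both cases beta(e_A) has trace 0. On a triangular matrix the
  recursion produces C_(k) = (-1)^(k-1) e_k, where e_k is the k-th elementary symmetric function
  of the diagonal, so by similarity C_(k)(M) = (-1)^(k-1) e_k(eigenvalues of beta(M)).
  Normality gives ker beta(M)^2 = ker beta(M), through the positivity of <X^dagger X>_0; hence
  the eigenvalue 0 is semisimple and rank(M) is the number r of nonzero eigenvalues counted with
  multiplicity. Therefore C_(j) = 0 for j > r, while C_(r) is, up to sign, the product of the
  nonzero eigenvalues.
*)
theory Submission
  imports Defs "Jordan_Normal_Form.Jordan_Normal_Form_Existence"
    "Jordan_Normal_Form.Jordan_Normal_Form_Uniqueness"
begin

section \<open>Elementary symmetric functions\<close>

definition esym :: "('a \<Rightarrow> 'b::comm_semiring_1) \<Rightarrow> 'a set \<Rightarrow> nat \<Rightarrow> 'b" where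
  "esym f S k = (\<Sum>T\<in>{T. T \<subseteq> S \<and> card T = k}. \<Prod>t\<in>T. f t)"

lemma finite_subsets_card: "finite S \<Longrightarrow> finite {T. T \<subseteq> S \<and> card T = k}"
  by (rule finite_subset[of _ "Pow S"]) auto

lemma esym_0:
  assumes "finite S"
  shows "esym f S 0 = 1"
proof -
  have "{T. T \<subseteq> S \<and> card T = 0} = {{}}"
    by (auto dest: rev_finite_subset[OF assms])
  then show ?thesis unfolding esym_def by simp
qed

lemma esym_eq_0_if_card_less:
  assumes "finite S" and "card S < k"
  shows "esym f S k = 0"
proof -
  have "{T. T \<subseteq> S \<and> card T = k} = {}"
    using assms by (auto dest: card_mono[OF assms(1)])
  then show ?thesis unfolding esym_def by (simp only: sum.empty)
qed

lemma subsets_card_Suc_insert: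
  assumes S: "finite S" and i: "i \<notin> S"
  shows "{T. T \<subseteq> insert i S \<and> card T = Suc k}
    = {T. T \<subseteq> S \<and> card T = Suc k} \<union> insert i ` {U. U \<subseteq> S \<and> card U = k}"
    (is "_ = ?A \<union> insert i ` ?B")
proof (intro equalityI subsetI)
  fix T assume T: "T \<in> {T. T \<subseteq> insert i S \<and> card T = Suc k}"
  show "T \<in> ?A \<union> insert i ` ?B"
  proof (cases "i \<in> T")
    case True
    have "finite T"
      using T S by (metis finite_insert finite_subset mem_Collect_eq)
    then have "T - {i} \<in> ?B"
      using T True by auto
    moreover have "T = insert i (T - {i})"
      using True by auto
    ultimately show ?thesis by blast
  next
    case False
    then show ?thesis using T by auto
  qed
next
  fix T assume "T \<in> ?A \<union> insert i ` ?B"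
  then consider "T \<in> ?A" | U where "U \<in> ?B" "T = insert i U" by blast
  then show "T \<in> {T. T \<subseteq> insert i S \<and> card T = Suc k}"
  proof cases
    case (2 U)
    then have "finite U" "i \<notin> U"
      using S i rev_finite_subset[OF S] by auto
    with 2 show ?thesis by auto
  qed auto
qed

lemma esym_insert_Suc:
  assumes S: "finite S" and i: "i \<notin> S"
  shows "esym f (insert i S) (Suc k) = esym f S (Suc k) + f i * esym f S k"
proof -
  let ?A = "{T. T \<subseteq> S \<and> card T = Suc k}"
  let ?B = "{U. U \<subseteq> S \<and> card U = k}"
  have inj: "inj_on (insert i) ?B"
  proof (rule inj_onI)
    fix U V assume U: "U \<in> ?B" and V: "V \<in> ?B" and UV: "insert i U = insert i V"
    have "i \<notin> U" "i \<notin> V" using U V i by auto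
    then show "U = V" using arg_cong[OF UV, of "\<lambda>X. X - {i}"] by simp
  qed
  have "esym f (insert i S) (Suc k) = (\<Sum>T\<in>?A. \<Prod>t\<in>T. f t) + (\<Sum>T\<in>insert i ` ?B. \<Prod>t\<in>T. f t)"
    unfolding esym_def subsets_card_Suc_insert[OF S i]
    by (rule sum.union_disjoint) (use S i finite_subsets_card in auto)
  also have "(\<Sum>T\<in>insert i ` ?B. \<Prod>t\<in>T. f t) = (\<Sum>U\<in>?B. \<Prod>t\<in>insert i U. f t)"
    by (rule sum.reindex[OF inj, unfolded comp_def])
  also have "(\<Sum>U\<in>?B. \<Prod>t\<in>insert i U. f t) = f i * esym f S k"
    unfolding esym_def sum_distrib_left
  proof (rule sum.cong[OF refl])
    fix U assume "U \<in> ?B"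
    then have "finite U" "i \<notin> U"
      using S i rev_finite_subset[OF S] by auto
    then show "(\<Prod>t\<in>insert i U. f t) = f i * (\<Prod>t\<in>U. f t)" by simp
  qed
  finally show ?thesis unfolding esym_def .
qed

lemma sum_mult_esym_remove:
  assumes "finite S"
  shows "(\<Sum>i\<in>S. f i * esym f (S - {i}) k) = of_nat (Suc k) * esym f S (Suc k)"
  using assms
proof (induction S arbitrary: k rule: finite_induct)
  case empty
  then show ?case by (simp add: esym_eq_0_if_card_less)
next
  case (insert a S)
  have rem: "insert a S - {i} = insert a (S - {i})" if "i \<in> S" for i
    using that insert by auto
  have "(\<Sum>i\<in>insert a S. f i * esym f (insert a S - {i}) k)
      = f a * esym f S k + (\<Sum>i\<in>S. f i * esym f (insert a (S - {i})) k)"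
    using insert by (simp add: rem)
  also have "\<dots> = of_nat (Suc k) * esym f (insert a S) (Suc k)"
  proof (cases k)
    case 0
    then show ?thesis
      using insert insert.IH[of 0] by (simp add: esym_0 esym_insert_Suc add.commute)
  next
    case (Suc k')
    have "(\<Sum>i\<in>S. f i * esym f (insert a (S - {i})) k)
        = (\<Sum>i\<in>S. f i * esym f (S - {i}) k + f a * (f i * esym f (S - {i}) k'))"
      using insert Suc by (intro sum.cong refl) (simp add: esym_insert_Suc algebra_simps)
    also have "\<dots> = of_nat (Suc k) * esym f S (Suc k) + f a * (of_nat (Suc k') * esym f S k)"
      using insert.IH[of k] insert.IH[of k'] Suc
      by (simp add: sum.distrib sum_distrib_left[symmetric])
    finally show ?thesis
      using insert Suc by (simp add: esym_insert_Suc algebra_simps)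
  qed
  finally show ?case .
qed

lemma esym_restrict_nonzero:
  assumes "finite S"
  shows "esym f S k = esym f {i\<in>S. f i \<noteq> 0} k"
  unfolding esym_def
proof (rule sum.mono_neutral_right)
  show "\<forall>T\<in>{T. T \<subseteq> S \<and> card T = k} - {T. T \<subseteq> {i \<in> S. f i \<noteq> 0} \<and> card T = k}.
      (\<Prod>t\<in>T. f t) = 0"
    using assms by (auto dest: finite_subset intro: prod_zero)
qed (use assms finite_subsets_card in auto)

lemma esym_card: "finite S \<Longrightarrow> esym f S (card S) = (\<Prod>t\<in>S. f t)"
proof -
  assume "finite S"
  then have "{T. T \<subseteq> S \<and> card T = card S} = {S}"
    using card_subset_eq by blast
  then show ?thesis unfolding esym_def by simp
qed

(* The diagonal of the Faddeev-LeVerrier iterates of a triangular matrix with diagonal f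
   evolves by the scalar recursion for d. *)
lemma faddeev_leverrier_scalar:
  fixes f :: "'a \<Rightarrow> 'b::field_char_0" and d :: "nat \<Rightarrow> 'a \<Rightarrow> 'b"
  assumes I: "finite I"
    and d0: "\<And>i. i \<in> I \<Longrightarrow> d 0 i = f i"
    and dSuc: "\<And>k i. i \<in> I \<Longrightarrow> d (Suc k) i = f i * (d k i - (\<Sum>j\<in>I. d k j) / of_nat (Suc k))"
  shows "(\<Sum>j\<in>I. d k j) / of_nat (Suc k) = (-1)^k * esym f I (Suc k)"
proof -
  have mean: "(\<Sum>j\<in>I. d k j) / of_nat (Suc k) = (-1)^k * esym f I (Suc k)"
    if closed: "\<forall>i\<in>I. d k i = (-1)^k * f i * esym f (I - {i}) k" for k
  proof -
    have "(\<Sum>j\<in>I. d k j) = (-1)^k * (\<Sum>j\<in>I. f j * esym f (I - {j}) k)"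
      using closed by (simp add: sum_distrib_left mult.assoc)
    also have "\<dots> = (-1)^k * of_nat (Suc k) * esym f I (Suc k)"
      by (simp add: sum_mult_esym_remove[OF I])
    finally show ?thesis by (simp del: of_nat_Suc)
  qed
  have "\<forall>i\<in>I. d k i = (-1)^k * f i * esym f (I - {i}) k" for k
  proof (induction k)
    case 0
    then show ?case using d0 I by (simp add: esym_0)
  next
    case (Suc k)
    show ?case
    proof
      fix i assume i: "i \<in> I"
      have "esym f I (Suc k) = esym f (I - {i}) (Suc k) + f i * esym f (I - {i}) k"
        using esym_insert_Suc[of "I - {i}" i f k] I i by (simp add: insert_absorb)
      moreover have "d (Suc k) i = f i * (d k i - (-1)^k * esym f I (Suc k))"
        using dSuc[OF i] mean[OF Suc.IH] by simp
      ultimately show "d (Suc k) i = (-1)^Suc k * f i * esym f (I - {i}) (Suc k)"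
        using Suc.IH i by (simp add: algebra_simps)
    qed
  qed
  then show ?thesis by (rule mean)
qed

section \<open>The Faddeev--LeVerrier recursion for matrices\<close>

definition mat_trace :: "'a::comm_ring_1 mat \<Rightarrow> 'a" where
  "mat_trace A = (\<Sum>i\<in>{0..<dim_row A}. A $$ (i, i))"

lemma mat_trace_mult_comm:
  fixes A B :: "'a::comm_ring_1 mat"
  assumes A: "A \<in> carrier_mat n m" and B: "B \<in> carrier_mat m n"
  shows "mat_trace (A * B) = mat_trace (B * A)"
proof -
  have "mat_trace (A * B) = (\<Sum>i\<in>{0..<n}. \<Sum>l\<in>{0..<m}. A $$ (i, l) * B $$ (l, i))"
    unfolding mat_trace_def using A B by (auto simp: scalar_prod_def intro!: sum.cong)
  also have "\<dots> = (\<Sum>l\<in>{0..<m}. \<Sum>i\<in>{0..<n}. B $$ (l, i) * A $$ (i, l))"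
    by (subst sum.swap) (simp add: mult.commute)
  also have "\<dots> = mat_trace (B * A)"
    unfolding mat_trace_def using A B by (auto simp: scalar_prod_def intro!: sum.cong)
  finally show ?thesis .
qed

lemma mat_trace_add:
  "A \<in> carrier_mat n n \<Longrightarrow> B \<in> carrier_mat n n \<Longrightarrow> mat_trace (A + B) = mat_trace A + mat_trace B"
  unfolding mat_trace_def by (simp add: sum.distrib)

lemma mat_trace_smult: "A \<in> carrier_mat n n \<Longrightarrow> mat_trace (c \<cdot>\<^sub>m A) = c * mat_trace A"
  unfolding mat_trace_def by (auto simp: sum_distrib_left intro!: sum.cong)

lemma mat_trace_one: "mat_trace (1\<^sub>m n :: 'a::comm_ring_1 mat) = of_nat n"
  unfolding mat_trace_def by simp

lemma mat_trace_zero: "mat_trace (0\<^sub>m n n :: 'a::comm_ring_1 mat) = 0"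
  unfolding mat_trace_def by simp

lemma mat_mult_index:
  fixes A B :: "'a::comm_ring_1 mat"
  assumes "A \<in> carrier_mat n m" "B \<in> carrier_mat m r" "i < n" "j < r"
  shows "(A * B) $$ (i, j) = (\<Sum>l\<in>{0..<m}. A $$ (i, l) * B $$ (l, j))"
  using assms by (auto simp: scalar_prod_def intro!: sum.cong)

lemma mat_trace_conjugate:
  fixes P Q A :: "'a::comm_ring_1 mat"
  assumes P: "P \<in> carrier_mat n n" and Q: "Q \<in> carrier_mat n n" and QP: "Q * P = 1\<^sub>m n"
    and A: "A \<in> carrier_mat n n"
  shows "mat_trace (P * A * Q) = mat_trace A"
proof -
  have "mat_trace (P * A * Q) = mat_trace (Q * (P * A))"
    using P Q A by (intro mat_trace_mult_comm[of _ n n]) auto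
  also have "Q * (P * A) = A"
    using P Q A QP by (simp add: assoc_mult_mat[of _ n n _ n _ n, symmetric])
  finally show ?thesis .
qed

lemma conjugate_mult:
  fixes P Q A B :: "'a::comm_ring_1 mat"
  assumes P: "P \<in> carrier_mat n n" and Q: "Q \<in> carrier_mat n n" and QP: "Q * P = 1\<^sub>m n"
    and A: "A \<in> carrier_mat n n" and B: "B \<in> carrier_mat n n"
  shows "(P * A * Q) * (P * B * Q) = P * (A * B) * Q"
proof -
  have "(P * A * Q) * (P * B * Q) = P * A * (Q * P) * B * Q"
    using P Q A B by (simp add: assoc_mult_mat[of _ n n _ n _ n])
  also have "\<dots> = P * (A * B) * Q"
    using P Q A B QP by (simp add: assoc_mult_mat[of _ n n _ n _ n])
  finally show ?thesis .
qed

lemma conjugate_minus_scalar: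
  fixes P Q A :: "'a::comm_ring_1 mat"
  assumes P: "P \<in> carrier_mat n n" and Q: "Q \<in> carrier_mat n n" and PQ: "P * Q = 1\<^sub>m n"
    and A: "A \<in> carrier_mat n n"
  shows "P * A * Q - c \<cdot>\<^sub>m 1\<^sub>m n = P * (A - c \<cdot>\<^sub>m 1\<^sub>m n) * Q"
proof -
  have "P * (A - c \<cdot>\<^sub>m 1\<^sub>m n) = P * A - P * (c \<cdot>\<^sub>m 1\<^sub>m n)"
    using P A by (intro mult_minus_distrib_mat) auto
  also have "P * (c \<cdot>\<^sub>m 1\<^sub>m n) = c \<cdot>\<^sub>m P"
    using P by (simp add: mult_smult_distrib[OF P one_carrier_mat])
  finally have "P * (A - c \<cdot>\<^sub>m 1\<^sub>m n) * Q = (P * A - c \<cdot>\<^sub>m P) * Q" by simp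
  also have "\<dots> = P * A * Q - (c \<cdot>\<^sub>m P) * Q"
    using P A Q by (intro minus_mult_distrib_mat) auto
  also have "(c \<cdot>\<^sub>m P) * Q = c \<cdot>\<^sub>m 1\<^sub>m n"
    using P Q PQ by (simp add: mult_smult_assoc_mat[of _ n n])
  finally show ?thesis by simp
qed

(* The matrix form of cl_Mseq and cl_C: fl_seq n A k is A_(k+1), and fl_coeff n A k is the
   coefficient c_k in det (x I - A) = x^n - c_1 x^(n-1) - ... - c_n. *)
fun fl_seq :: "nat \<Rightarrow> 'a::field mat \<Rightarrow> nat \<Rightarrow> 'a mat" where
  "fl_seq n A 0 = A"
| "fl_seq n A (Suc k) = A * (fl_seq n A k - (mat_trace (fl_seq n A k) / of_nat (Suc k)) \<cdot>\<^sub>m 1\<^sub>m n)"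

definition fl_coeff :: "nat \<Rightarrow> 'a::field mat \<Rightarrow> nat \<Rightarrow> 'a" where
  "fl_coeff n A k = mat_trace (fl_seq n A (k - 1)) / of_nat k"

lemma fl_seq_carrier: "A \<in> carrier_mat n n \<Longrightarrow> fl_seq n A k \<in> carrier_mat n n"
  by (induction k) auto

lemma fl_seq_similar:
  assumes wit: "similar_mat_wit A J P Q" and A: "A \<in> carrier_mat n n"
  shows "fl_seq n A k = P * fl_seq n J k * Q"
proof -
  from similar_mat_witD2[OF A wit] have PQ: "P * Q = 1\<^sub>m n" and QP: "Q * P = 1\<^sub>m n"
    and AJ: "A = P * J * Q" and J: "J \<in> carrier_mat n n" and P: "P \<in> carrier_mat n n"
    and Q: "Q \<in> carrier_mat n n" by auto
  show ?thesis
  proof (induction k)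
    case 0
    then show ?case using AJ by simp
  next
    case (Suc k)
    let ?X = "fl_seq n J k"
    have X: "?X \<in> carrier_mat n n" using fl_seq_carrier[OF J] .
    have tr: "mat_trace (fl_seq n A k) = mat_trace ?X"
      using Suc.IH mat_trace_conjugate[OF P Q QP X] by simp
    let ?c = "mat_trace ?X / of_nat (Suc k)"
    have "fl_seq n A (Suc k) = (P * J * Q) * (P * ?X * Q - ?c \<cdot>\<^sub>m 1\<^sub>m n)"
      using Suc.IH AJ tr by (simp del: of_nat_Suc)
    also have "\<dots> = (P * J * Q) * (P * (?X - ?c \<cdot>\<^sub>m 1\<^sub>m n) * Q)"
      using conjugate_minus_scalar[OF P Q PQ X] by simp
    also have "\<dots> = P * (J * (?X - ?c \<cdot>\<^sub>m 1\<^sub>m n)) * Q"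
      using X J by (intro conjugate_mult[OF P Q QP]) auto
    finally show ?case by (simp del: of_nat_Suc)
  qed
qed

lemma fl_coeff_similar:
  assumes "similar_mat_wit A J P Q" and A: "A \<in> carrier_mat n n"
  shows "fl_coeff n A k = fl_coeff n J k"
proof -
  from similar_mat_witD2[OF A assms(1)] have "Q * P = 1\<^sub>m n" and "J \<in> carrier_mat n n"
    and "P \<in> carrier_mat n n" and "Q \<in> carrier_mat n n" by auto
  then show ?thesis
    unfolding fl_coeff_def fl_seq_similar[OF assms]
    by (simp add: mat_trace_conjugate fl_seq_carrier)
qed

lemma upper_triangular_mult:
  fixes A B :: "'a::comm_ring_1 mat"
  assumes A: "A \<in> carrier_mat n n" and B: "B \<in> carrier_mat n n"
    and uA: "upper_triangular A" and uB: "upper_triangular B"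
  shows "upper_triangular (A * B)"
    and "i < n \<Longrightarrow> (A * B) $$ (i, i) = A $$ (i, i) * B $$ (i, i)"
proof -
  note entry = mat_mult_index[OF A B]
  have A0: "A $$ (i, l) = 0" if "l < i" "i < n" for i l
    using upper_triangularD[OF uA] that A by simp
  have B0: "B $$ (l, j) = 0" if "j < l" "l < n" for j l
    using upper_triangularD[OF uB] that B by simp
  show "upper_triangular (A * B)"
  proof (rule upper_triangularI)
    fix i j assume ji: "j < i" and "i < dim_row (A * B)"
    then have i: "i < n" and j: "j < n" using A by auto
    have "A $$ (i, l) * B $$ (l, j) = 0" if "l < n" for l
    proof (cases "l < i")
      case True
      then show ?thesis using A0 i by simp
    next
      case False
      then show ?thesis using B0 ji that by simp
    qed
    then show "(A * B) $$ (i, j) = 0" using entry[OF i j] by simp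
  qed
  assume i: "i < n"
  have "(\<Sum>l\<in>{0..<n} - {i}. A $$ (i, l) * B $$ (l, i)) = 0"
  proof (rule sum.neutral, rule ballI)
    fix l assume "l \<in> {0..<n} - {i}"
    then have "l < i \<or> i < l" "l < n" by auto
    then show "A $$ (i, l) * B $$ (l, i) = 0" using A0[of l i] B0[of i l] i by auto
  qed
  then show "(A * B) $$ (i, i) = A $$ (i, i) * B $$ (i, i)"
    using entry[OF i i] i by (simp add: sum.remove[of "{0..<n}" i])
qed

lemma fl_seq_upper_triangular:
  fixes J :: "'a::field mat"
  assumes J: "J \<in> carrier_mat n n" and uJ: "upper_triangular J"
  shows "upper_triangular (fl_seq n J k)"
    and "i < n \<Longrightarrow> fl_seq n J (Suc k) $$ (i, i)
           = J $$ (i, i) * (fl_seq n J k $$ (i, i) - mat_trace (fl_seq n J k) / of_nat (Suc k))"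
proof -
  have shift: "upper_triangular (X - c \<cdot>\<^sub>m 1\<^sub>m n)"
    if "X \<in> carrier_mat n n" "upper_triangular X" for X :: "'a mat" and c
    using that by (auto simp: upper_triangular_def)
  show ut: "upper_triangular (fl_seq n J k)" for k
  proof (induction k)
    case (Suc k)
    then show ?case
      using upper_triangular_mult(1)[OF J _ uJ shift] fl_seq_carrier[OF J]
      by (simp add: minus_carrier_mat)
  qed (simp add: uJ)
  assume i: "i < n"
  then show "fl_seq n J (Suc k) $$ (i, i)
           = J $$ (i, i) * (fl_seq n J k $$ (i, i) - mat_trace (fl_seq n J k) / of_nat (Suc k))"
    using upper_triangular_mult(2)[OF J _ uJ shift[OF _ ut]] fl_seq_carrier[OF J]
    by (simp add: minus_carrier_mat del: of_nat_Suc)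
qed

lemma fl_coeff_upper_triangular:
  fixes J :: "'a::field_char_0 mat"
  assumes J: "J \<in> carrier_mat n n" and uJ: "upper_triangular J"
  shows "fl_coeff n J (Suc k) = (-1)^k * esym (\<lambda>i. J $$ (i, i)) {0..<n} (Suc k)"
proof -
  define d where "d k i = fl_seq n J k $$ (i, i)" for k i
  have tr: "mat_trace (fl_seq n J k) = (\<Sum>j\<in>{0..<n}. d k j)" for k
    unfolding mat_trace_def d_def using fl_seq_carrier[OF J, of k] by simp
  have "fl_coeff n J (Suc k) = (\<Sum>j\<in>{0..<n}. d k j) / of_nat (Suc k)"
    unfolding fl_coeff_def tr by simp
  also have "\<dots> = (-1)^k * esym (\<lambda>i. J $$ (i, i)) {0..<n} (Suc k)"
  proof (rule faddeev_leverrier_scalar)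
    fix k i assume "i \<in> {0..<n}"
    then have "d (Suc k) i = J $$ (i, i) * (d k i - mat_trace (fl_seq n J k) / of_nat (Suc k))"
      unfolding d_def by (intro fl_seq_upper_triangular(2)[OF J uJ]) simp
    then show "d (Suc k) i = J $$ (i, i) * (d k i - (\<Sum>j\<in>{0..<n}. d k j) / of_nat (Suc k))"
      by (simp only: tr)
  qed (simp_all add: d_def)
  finally show ?thesis .
qed

section \<open>Matrices of index at most one\<close>

lemma (in vec_space) image_mult_mat_vec_eq_span_cols:
  assumes A: "A \<in> carrier_mat n n"
  shows "(\<lambda>v. A *\<^sub>v v) ` carrier_vec n = span (set (cols A))"
proof -
  have cols: "set (cols A) \<subseteq> carrier_vec n" using A by (auto simp: cols_def)
  have "lincomb_list c (cols A) = A *\<^sub>v vec n c" for c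
  proof -
    have "lincomb_list c (cols A) = mat_of_cols n (cols A) *\<^sub>v vec (length (cols A)) c"
      by (rule lincomb_list_as_mat_mult) (use cols in auto)
    then show ?thesis using A mat_of_cols_cols[of A] by simp
  qed
  then have "span (set (cols A)) = {A *\<^sub>v vec n c | c. True}"
    unfolding span_list_as_span[OF cols, symmetric] span_list_def by auto
  also have "\<dots> = (\<lambda>v. A *\<^sub>v v) ` carrier_vec n"
  proof (intro equalityI subsetI)
    fix x assume "x \<in> (\<lambda>v. A *\<^sub>v v) ` carrier_vec n"
    then obtain v :: "'a vec" where v: "v \<in> carrier_vec n" "x = A *\<^sub>v v" by auto
    moreover have "v = vec n (\<lambda>i. v $ i)" using v by auto
    ultimately have "x = A *\<^sub>v vec n (\<lambda>i. v $ i)" by metis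
    then show "x \<in> {A *\<^sub>v vec n c | c. True}" by blast
  qed auto
  finally show ?thesis by simp
qed

lemma rank_plus_kernel_dim:
  fixes A :: "'a::field mat"
  assumes A: "A \<in> carrier_mat n n"
  shows "vec_space.rank n A + kernel_dim A = n"
proof -
  let ?V = "module_vec TYPE('a) n"
  let ?T = "\<lambda>v. A *\<^sub>v v"
  interpret V: vec_space "TYPE('a)" n .
  interpret K: kernel n n A by (unfold_locales, rule A)
  interpret LM: linear_map class_ring ?V ?V ?T
  proof (unfold_locales)
    show "?T \<in> LinearCombinations.module_hom class_ring ?V ?V"
      unfolding LinearCombinations.module_hom_def using A
      by (auto simp: module_vec_def mult_add_distrib_mat_vec mult_mat_vec)
  qed
  have "vectorspace.dim class_ring (V.vs LM.imT) + vectorspace.dim class_ring (V.vs LM.kerT) = n"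
    using LM.rank_nullity V.dim_is_n by simp
  moreover have "LM.kerT = mat_kernel A"
    unfolding LM.ker_def mat_kernel_def using A by (auto simp: module_vec_def)
  moreover have "LM.imT = V.span (set (cols A))"
    using V.image_mult_mat_vec_eq_span_cols[OF A] unfolding LM.im_def by (simp add: module_vec_def)
  ultimately show ?thesis
    unfolding V.rank_def using K.kernel_dim by simp
qed

lemma rank_pos_if_nonzero:
  fixes A :: "complex mat"
  assumes A: "A \<in> carrier_mat n n" and nz: "A \<noteq> 0\<^sub>m n n"
  shows "vec_space.rank n A \<ge> 1"
proof -
  interpret V: vec_space "TYPE(complex)" n .
  obtain i j where ij: "i < n" "j < n" "A $$ (i,j) \<noteq> 0"
    using nz A by (metis carrier_matD(1) carrier_matD(2) eq_matI index_zero_mat(1) index_zero_mat(2) index_zero_mat(3))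
  let ?v = "col A j"
  have v: "?v \<in> carrier_vec n" using A by auto
  have vnz: "?v \<noteq> 0\<^sub>v n" using ij A
    by (metis carrier_matD(1) col_def index_vec index_zero_vec(1))
  have li0: "V.lin_indpt {}"
    by (metis (no_types) empty_subsetI V.fin_dim V.finite_basis_exists V.subset_li_is_li vec_vs vectorspace.basis_def)
  have "?v \<in> V.span {} \<longleftrightarrow> V.lin_dep ({} \<union> {?v})"
    by (rule V.lin_dep_iff_in_span) (use li0 v in auto)
  moreover have "?v \<notin> V.span {}" using V.span_empty vnz by simp
  ultimately have li: "V.lin_indpt {?v}" by simp
  have "{?v} \<subseteq> set (cols A)" using ij A by (auto simp: cols_def)
  from V.rank_ge_card_indpt[OF A this li] show ?thesis by simp
qed

lemma mat_kernel_pow_Suc: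
  fixes A :: "'a::field mat"
  assumes A: "A \<in> carrier_mat n n"
    and index_le_1: "\<forall>v\<in>carrier_vec n. A *\<^sub>v (A *\<^sub>v v) = 0\<^sub>v n \<longrightarrow> A *\<^sub>v v = 0\<^sub>v n"
  shows "mat_kernel (A ^\<^sub>m Suc k) = mat_kernel A"
proof (induction k)
  case 0
  then show ?case using A by simp
next
  case (Suc k)
  have Ak: "A ^\<^sub>m Suc k \<in> carrier_mat n n" using pow_carrier_mat[OF A] .
  show ?case
  proof (intro equalityI subsetI)
    fix v assume "v \<in> mat_kernel (A ^\<^sub>m Suc (Suc k))"
    then have v: "v \<in> carrier_vec n" and "A ^\<^sub>m Suc k *\<^sub>v (A *\<^sub>v v) = 0\<^sub>v n"
      using A Ak unfolding mat_kernel_def by auto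
    then have "A *\<^sub>v v \<in> mat_kernel (A ^\<^sub>m Suc k)"
      using Ak A unfolding mat_kernel_def by auto
    then have "A *\<^sub>v (A *\<^sub>v v) = 0\<^sub>v n"
      using Suc.IH A unfolding mat_kernel_def by auto
    then show "v \<in> mat_kernel A"
      using index_le_1 v A unfolding mat_kernel_def by auto
  next
    fix v assume "v \<in> mat_kernel A"
    then have v: "v \<in> carrier_vec n" and Av: "A *\<^sub>v v = 0\<^sub>v n"
      using A unfolding mat_kernel_def by auto
    have "(A ^\<^sub>m Suc k * A) *\<^sub>v v = A ^\<^sub>m Suc k *\<^sub>v (A *\<^sub>v v)"
      using A Ak v by simp
    also have "\<dots> = 0\<^sub>v n"
      unfolding Av using Ak by (intro eq_vecI) (auto simp: scalar_prod_def)
    finally show "v \<in> mat_kernel (A ^\<^sub>m Suc (Suc k))"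
      using v A unfolding mat_kernel_def by simp
  qed
qed

lemma kernel_dim_cong:
  fixes A B :: "'a::field mat"
  assumes A: "A \<in> carrier_mat n n" and B: "B \<in> carrier_mat n n"
    and eq: "mat_kernel A = mat_kernel B"
  shows "kernel_dim A = kernel_dim B"
proof -
  interpret KA: kernel n n A by (unfold_locales, rule A)
  interpret KB: kernel n n B by (unfold_locales, rule B)
  show ?thesis using KA.kernel_dim KB.kernel_dim eq by simp
qed

lemma diag_mat_jordan_matrix:
  "diag_mat (jordan_matrix n_as) = concat (map (\<lambda>(n, a). replicate n a) n_as)"
  unfolding jordan_matrix_def
proof (induct n_as)
  case Nil
  then show ?case by (simp add: diag_mat_def)
next
  case (Cons na n_as)
  obtain n a where na: "na = (n,a)" by force
  let ?B = "diag_block_mat (map (\<lambda>(x, y). jordan_block x y) n_as)"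
  have B: "?B \<in> carrier_mat (dim_row ?B) (dim_row ?B)"
    using jordan_matrix_carrier[of n_as] unfolding jordan_matrix_def carrier_mat_def by auto
  have jb: "diag_mat (jordan_block n a) = replicate n a"
    by (rule nth_equalityI) (auto simp: diag_mat_def)
  show ?case unfolding na
    using diag_four_block_mat[OF jordan_block_carrier B] Cons jb
    by (simp add: Let_def)
qed

lemma length_filter_concat_replicate:
  "length (filter P (concat (map (\<lambda>(n, a). replicate n a) xs)))
     = sum_list (map fst (filter (\<lambda>(n, a). P a) xs))"
  by (induction xs) auto

(* As ker A^(n+1) = ker A, the kernel of A is its whole generalised 0-eigenspace. *)
lemma kernel_dim_eq_card_zero_diag:
  fixes A :: "'a::field mat"
  assumes A: "A \<in> carrier_mat n n"
    and index_le_1: "\<forall>v\<in>carrier_vec n. A *\<^sub>v (A *\<^sub>v v) = 0\<^sub>v n \<longrightarrow> A *\<^sub>v v = 0\<^sub>v n"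
    and jnf: "jordan_nf A n_as"
  shows "kernel_dim A = card {i. i < n \<and> jordan_matrix n_as $$ (i, i) = 0}"
proof -
  let ?J = "jordan_matrix n_as"
  let ?zero_blocks = "map fst [(m, e)\<leftarrow>n_as. e = 0]"
  from jnf obtain P Q where "similar_mat_wit A ?J P Q"
    unfolding jordan_nf_def similar_mat_def by auto
  from similar_mat_witD2[OF A this] have "?J \<in> carrier_mat n n" by auto
  then have n: "sum_list (map fst n_as) = n" by auto
  have char: "char_matrix A 0 = A"
    using A by (intro eq_matI) (auto simp: char_matrix_def)
  have "kernel_dim A = kernel_dim (A ^\<^sub>m Suc n)"
    using mat_kernel_pow_Suc[OF A index_le_1]
    by (intro kernel_dim_cong[OF A pow_carrier_mat[OF A]]) simp
  also have "A ^\<^sub>m Suc n = char_matrix A 0 ^\<^sub>m Suc n"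
    using char by simp
  also have "kernel_dim \<dots> = (\<Sum>m\<leftarrow>?zero_blocks. min (Suc n) m)"
    unfolding dim_gen_eigenspace_def[symmetric] by (rule dim_gen_eigenspace[OF jnf])
  also have "\<dots> = sum_list ?zero_blocks"
  proof -
    have "min (Suc n) m = m" if "m \<in> set ?zero_blocks" for m
    proof -
      have "m \<in> set (map fst n_as)" using that by auto
      then show ?thesis using member_le_sum_list[of m "map fst n_as"] n by simp
    qed
    then have "map (min (Suc n)) ?zero_blocks = ?zero_blocks"
      by (rule map_idI)
    then show ?thesis by (rule arg_cong)
  qed
  also have "\<dots> = length (filter (\<lambda>x. x = 0) (diag_mat ?J))"
    using length_filter_concat_replicate[of "\<lambda>x. x = 0" n_as]
    by (simp add: diag_mat_jordan_matrix)
  also have "\<dots> = card {i. i < n \<and> ?J $$ (i, i) = 0}"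
    unfolding length_filter_conv_card
    by (intro arg_cong[where f = card]) (auto simp: diag_mat_def n)
  finally show ?thesis .
qed

lemma fl_coeff_esym_nonzero_eigenvalues:
  fixes A :: "complex mat"
  assumes A: "A \<in> carrier_mat n n"
    and index_le_1: "\<forall>v\<in>carrier_vec n. A *\<^sub>v (A *\<^sub>v v) = 0\<^sub>v n \<longrightarrow> A *\<^sub>v v = 0\<^sub>v n"
  obtains Z ev where "finite (Z :: nat set)" and "vec_space.rank n A = card Z"
    and "\<And>i. i \<in> Z \<Longrightarrow> (ev i :: complex) \<noteq> 0"
    and "\<And>k. fl_coeff n A (Suc k) = (-1)^k * esym ev Z (Suc k)"
proof -
  obtain as where "char_poly A = (\<Prod>a\<leftarrow>as. [:- a, 1:])"
    using char_poly_factorized[OF A] by auto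
  from jordan_nf_exists[OF A this] obtain n_as where jnf: "jordan_nf A n_as" by auto
  let ?J = "jordan_matrix n_as"
  from jnf obtain P Q where wit: "similar_mat_wit A ?J P Q"
    unfolding jordan_nf_def similar_mat_def by auto
  from similar_mat_witD2[OF A wit] have J: "?J \<in> carrier_mat n n" by auto
  have uJ: "upper_triangular ?J"
    using jordan_matrix_upper_triangular[of _ n_as] jordan_matrix_carrier[of n_as]
    by (intro upper_triangularI) auto
  define ev where "ev i = ?J $$ (i, i)" for i
  define Z where "Z = {i \<in> {0..<n}. ev i \<noteq> 0}"
  have "card ({i. i < n \<and> ev i = 0} \<union> Z) = card {i. i < n \<and> ev i = 0} + card Z"
    by (rule card_Un_disjoint) (auto simp: Z_def)
  moreover have "{i. i < n \<and> ev i = 0} \<union> Z = {0..<n}"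
    by (auto simp: Z_def)
  ultimately have "card {i. i < n \<and> ev i = 0} + card Z = n" by simp
  then have rank: "vec_space.rank n A = card Z"
    using rank_plus_kernel_dim[OF A] kernel_dim_eq_card_zero_diag[OF A index_le_1 jnf]
    unfolding ev_def by simp
  have coeff: "fl_coeff n A (Suc k) = (-1)^k * esym ev Z (Suc k)" for k
    unfolding fl_coeff_similar[OF wit A] fl_coeff_upper_triangular[OF J uJ] Z_def ev_def
    by (subst esym_restrict_nonzero) simp_all
  show ?thesis
  proof (rule that)
    show "finite Z" by (simp add: Z_def)
    show "ev i \<noteq> 0" if "i \<in> Z" for i using that by (simp add: Z_def)
  qed (rule rank, rule coeff)
qed

lemma fl_coeff_above_rank:
  fixes A :: "complex mat"
  assumes A: "A \<in> carrier_mat n n"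
    and index_le_1: "\<forall>v\<in>carrier_vec n. A *\<^sub>v (A *\<^sub>v v) = 0\<^sub>v n \<longrightarrow> A *\<^sub>v v = 0\<^sub>v n"
    and j: "vec_space.rank n A < j"
  shows "fl_coeff n A j = 0"
proof (rule fl_coeff_esym_nonzero_eigenvalues[OF A index_le_1])
  fix Z ev assume Z: "finite Z" "vec_space.rank n A = card Z" and "\<And>i. i \<in> Z \<Longrightarrow> ev i \<noteq> 0"
    and coeff: "\<And>k. fl_coeff n A (Suc k) = (-1)^k * esym ev Z (Suc k)"
  obtain k where k: "j = Suc k" using j by (cases j) auto
  show ?thesis
    unfolding k coeff using esym_eq_0_if_card_less[OF Z(1)] j Z(2) k by simp
qed

lemma fl_coeff_rank_nonzero:
  fixes A :: "complex mat"
  assumes A: "A \<in> carrier_mat n n"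
    and index_le_1: "\<forall>v\<in>carrier_vec n. A *\<^sub>v (A *\<^sub>v v) = 0\<^sub>v n \<longrightarrow> A *\<^sub>v v = 0\<^sub>v n"
    and r: "vec_space.rank n A \<ge> 1"
  shows "fl_coeff n A (vec_space.rank n A) \<noteq> 0"
proof (rule fl_coeff_esym_nonzero_eigenvalues[OF A index_le_1])
  fix Z ev assume Z: "finite Z" "vec_space.rank n A = card Z" and nz: "\<And>i. i \<in> Z \<Longrightarrow> ev i \<noteq> 0"
    and coeff: "\<And>k. fl_coeff n A (Suc k) = (-1)^k * esym ev Z (Suc k)"
  obtain k where k: "card Z = Suc k" using r Z(2) by (cases "card Z") auto
  have "esym ev Z (card Z) \<noteq> 0"
    unfolding esym_card[OF Z(1)] using Z(1) nz by simp
  then show ?thesis unfolding Z(2) k coeff by simp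
qed

lemma rank_eq_last_nonzero_coeff:
  fixes c :: "nat \<Rightarrow> 'a::zero"
  assumes "r \<le> n" and above: "\<And>j. r < j \<Longrightarrow> c j = 0" and at: "1 \<le> r \<Longrightarrow> c r \<noteq> 0"
    and k: "1 \<le> k" "k \<le> n" "c k \<noteq> 0" and tail: "\<forall>j\<in>{k+1..n}. c j = 0"
  shows "r = k"
proof (rule ccontr)
  assume "r \<noteq> k"
  then consider "r < k" | "k < r" by linarith
  then show False
  proof cases
    case 1
    then show False using above k by simp
  next
    case 2
    then show False using at tail \<open>r \<le> n\<close> by auto
  qed
qed

definition mat_unit :: "nat \<Rightarrow> nat \<Rightarrow> nat \<Rightarrow> 'a::{zero, one} mat" where
  "mat_unit n i j = mat n n (\<lambda>(k, l). if k = i \<and> l = j then 1 else 0)"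

lemma commute_mat_unit_entry:
  fixes D :: "'a::comm_ring_1 mat"
  assumes D: "D \<in> carrier_mat n n" and ij: "i < n" "j < n" and k: "k < n"
    and comm: "D * mat_unit n i j = mat_unit n i j * D"
  shows "D $$ (k, i) = (if k = i then D $$ (j, j) else 0)"
proof -
  have E: "mat_unit n i j \<in> carrier_mat n n" unfolding mat_unit_def by simp
  have "(D * mat_unit n i j) $$ (k, j) = (\<Sum>l\<in>{0..<n}. if l = i then D $$ (k, i) else 0)"
    unfolding mat_mult_index[OF D E k ij(2)]
    by (intro sum.cong refl) (auto simp: mat_unit_def ij)
  moreover have "(mat_unit n i j * D) $$ (k, j)
      = (\<Sum>l\<in>{0..<n}. if l = j then (if k = i then D $$ (j, j) else 0) else 0)"
    unfolding mat_mult_index[OF E D k ij(2)]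
    by (intro sum.cong refl) (auto simp: mat_unit_def ij k)
  ultimately show ?thesis using comm ij by simp
qed

lemma mat_trace_two_scalar_blocks:
  fixes D :: "'a::comm_ring_1 mat"
  assumes D: "D \<in> carrier_mat (2 * h) (2 * h)"
    and diag: "\<And>i. i < 2 * h \<Longrightarrow> D $$ (i, i) = (if i < h then a else b)"
  shows "mat_trace D = of_nat h * (a + b)"
proof -
  have "mat_trace D = (\<Sum>i\<in>{0..<h}. a) + (\<Sum>i\<in>{h..<2 * h}. b)"
    unfolding mat_trace_def using D diag
    by (simp add: sum.atLeastLessThan_concat[of 0 h "2 * h", symmetric])
  then show ?thesis by (simp add: algebra_simps)
qed

definition block_column_mat :: "nat \<Rightarrow> (nat \<Rightarrow> bool) \<Rightarrow> 'a vec \<Rightarrow> 'a::zero mat" where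
  "block_column_mat n g w = mat n n (\<lambda>(i, j). if g i = g j then w $ i else 0)"

lemma mult_block_column_mat:
  fixes A :: "'a::comm_ring_1 mat"
  assumes A: "A \<in> carrier_mat n n" and w: "w \<in> carrier_vec n"
    and blocks: "\<And>i j. i < n \<Longrightarrow> j < n \<Longrightarrow> g i \<noteq> g j \<Longrightarrow> A $$ (i, j) = 0"
  shows "A * block_column_mat n g w = block_column_mat n g (A *\<^sub>v w)"
proof (rule eq_matI)
  fix i j assume "i < dim_row (block_column_mat n g (A *\<^sub>v w))"
    and "j < dim_col (block_column_mat n g (A *\<^sub>v w))"
  then have i: "i < n" and j: "j < n" unfolding block_column_mat_def by auto
  have T: "block_column_mat n g w \<in> carrier_mat n n" unfolding block_column_mat_def by simp
  have "(A * block_column_mat n g w) $$ (i, j)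
      = (\<Sum>l\<in>{0..<n}. if g i = g j then A $$ (i, l) * w $ l else 0)"
    unfolding mat_mult_index[OF A T i j]
    by (intro sum.cong refl) (auto simp: block_column_mat_def blocks i j)
  also have "\<dots> = block_column_mat n g (A *\<^sub>v w) $$ (i, j)"
    using A w i j by (auto simp: block_column_mat_def scalar_prod_def intro!: sum.cong)
  finally show "(A * block_column_mat n g w) $$ (i, j) = block_column_mat n g (A *\<^sub>v w) $$ (i, j)" .
qed (use A in \<open>auto simp: block_column_mat_def\<close>)

lemma block_column_mat_eq_0:
  assumes "block_column_mat n g w = 0\<^sub>m n n" and "w \<in> carrier_vec n"
  shows "w = 0\<^sub>v n"
proof (rule eq_vecI)
  fix i assume "i < dim_vec (0\<^sub>v n :: 'a vec)"
  then show "w $ i = 0\<^sub>v n $ i"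
    using arg_cong[OF assms(1), of "\<lambda>T. T $$ (i, i)"] by (simp add: block_column_mat_def)
qed (use assms(2) in simp)

section \<open>The Clifford algebra\<close>

definition blade :: "nat set \<Rightarrow> cl" where
  "blade A = (\<lambda>B. if B = A then 1 else 0)"

definition cl_smult :: "complex \<Rightarrow> cl \<Rightarrow> cl" where
  "cl_smult c X = (\<lambda>A. c * X A)"

definition symdiff :: "nat set \<Rightarrow> nat set \<Rightarrow> nat set" where
  "symdiff A B = (A - B) \<union> (B - A)"

lemma symdiff_commute: "symdiff A B = symdiff B A" unfolding symdiff_def by auto

lemma symdiff_self: "symdiff A A = {}" unfolding symdiff_def by auto

lemma symdiff_empty: "symdiff {} A = A" "symdiff A {} = A" unfolding symdiff_def by auto

lemma symdiff_subset: "A \<subseteq> S \<Longrightarrow> B \<subseteq> S \<Longrightarrow> symdiff A B \<subseteq> S" unfolding symdiff_def by auto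

lemma symdiff_eq_empty_iff: "symdiff A B = {} \<longleftrightarrow> A = B" unfolding symdiff_def by auto

lemma cl_mult_symdiff: "cl_mult p q X Y = (\<lambda>C. \<Sum>A\<in>Pow {1..p+q}. \<Sum>B\<in>Pow {1..p+q}.
      (if symdiff A B = C then X A * Y B * blade_coeff p A B else 0))"
  unfolding cl_mult_def symdiff_def ..

lemma cl_mult_carrier: "cl_mult p q X Y \<in> cl_carrier p q"
  unfolding cl_carrier_def cl_mult_symdiff
proof (intro CollectI allI impI)
  fix C assume C: "\<not> C \<subseteq> {1..p+q}"
  show "(\<Sum>A\<in>Pow {1..p+q}. \<Sum>B\<in>Pow {1..p+q}. if symdiff A B = C then X A * Y B * blade_coeff p A B else 0) = 0"
  proof (rule sum.neutral, intro ballI, rule sum.neutral, intro ballI)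
    fix A B assume "A \<in> Pow {1..p+q}" "B \<in> Pow {1..p+q}"
    then have "symdiff A B \<subseteq> {1..p+q}" by (intro symdiff_subset) auto
    then have "symdiff A B \<noteq> C" using C by auto
    then show "(if symdiff A B = C then X A * Y B * blade_coeff p A B else 0) = 0" by simp
  qed
qed

lemma cl_mult_zero_right: "cl_mult p q X (\<lambda>A. 0) = (\<lambda>A. 0)"
  unfolding cl_mult_def by simp

lemma blade_carrier: "A \<subseteq> {1..p+q} \<Longrightarrow> blade A \<in> cl_carrier p q"
  unfolding blade_def cl_carrier_def by auto

lemma cl_smult_carrier: "X \<in> cl_carrier p q \<Longrightarrow> cl_smult c X \<in> cl_carrier p q"
  unfolding cl_smult_def cl_carrier_def by auto

lemma cl_one_eq_blade: "cl_one = blade {}" unfolding cl_one_def blade_def by auto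

lemma cl_zero_carrier: "(\<lambda>A. 0) \<in> cl_carrier p q"
  unfolding cl_carrier_def by auto

lemma cl_one_carrier: "cl_one \<in> cl_carrier p q"
  unfolding cl_one_eq_blade by (rule blade_carrier) auto

lemma cl_smult_smult: "cl_smult a (cl_smult b X) = cl_smult (a * b) X" unfolding cl_smult_def by auto

lemma cl_smult_one: "cl_smult 1 X = X" unfolding cl_smult_def by auto

lemma cl_mult_smult_left: "cl_mult p q (cl_smult c X) Y = cl_smult c (cl_mult p q X Y)"
  unfolding cl_mult_def cl_smult_def
  by (auto simp: sum_distrib_left intro!: sum.cong)

lemma cl_mult_smult_right: "cl_mult p q X (cl_smult c Y) = cl_smult c (cl_mult p q X Y)"
  unfolding cl_mult_def cl_smult_def
  by (auto simp: sum_distrib_left intro!: sum.cong)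

lemma cl_mult_blade_left:
  assumes A: "A \<subseteq> {1..p+q}"
  shows "cl_mult p q (blade A) X = (\<lambda>C. \<Sum>B\<in>Pow {1..p+q}. if symdiff A B = C then X B * blade_coeff p A B else 0)"
proof
  fix C
  have "cl_mult p q (blade A) X C = (\<Sum>A'\<in>Pow {1..p+q}. if A' = A then
      (\<Sum>B\<in>Pow {1..p+q}. if symdiff A B = C then X B * blade_coeff p A B else 0) else 0)"
    unfolding cl_mult_symdiff
  proof (intro sum.cong refl)
    fix A' show "(\<Sum>B\<in>Pow {1..p+q}. if symdiff A' B = C then blade A A' * X B * blade_coeff p A' B else 0) =
      (if A' = A then (\<Sum>B\<in>Pow {1..p+q}. if symdiff A B = C then X B * blade_coeff p A B else 0) else 0)"
      by (cases "A' = A") (simp_all add: blade_def cong: if_cong)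
  qed
  also have "\<dots> = (\<Sum>B\<in>Pow {1..p+q}. if symdiff A B = C then X B * blade_coeff p A B else 0)"
    using A by (subst sum.delta) auto
  finally show "cl_mult p q (blade A) X C = (\<Sum>B\<in>Pow {1..p+q}. if symdiff A B = C then X B * blade_coeff p A B else 0)" .
qed

lemma cl_mult_blade_right:
  assumes B: "B \<subseteq> {1..p+q}"
  shows "cl_mult p q X (blade B) = (\<lambda>C. \<Sum>A\<in>Pow {1..p+q}. if symdiff A B = C then X A * blade_coeff p A B else 0)"
proof
  fix C
  have "cl_mult p q X (blade B) C = (\<Sum>A\<in>Pow {1..p+q}. \<Sum>B'\<in>Pow {1..p+q}. if B' = B then
      (if symdiff A B = C then X A * blade_coeff p A B else 0) else 0)"
    unfolding cl_mult_symdiff blade_def by (intro sum.cong) auto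
  also have "\<dots> = (\<Sum>A\<in>Pow {1..p+q}. if symdiff A B = C then X A * blade_coeff p A B else 0)"
    using B by (intro sum.cong refl, subst sum.delta) auto
  finally show "cl_mult p q X (blade B) C = (\<Sum>A\<in>Pow {1..p+q}. if symdiff A B = C then X A * blade_coeff p A B else 0)" .
qed

lemma cl_mult_blade_blade:
  assumes A: "A \<subseteq> {1..p+q}" and B: "B \<subseteq> {1..p+q}"
  shows "cl_mult p q (blade A) (blade B) = cl_smult (blade_coeff p A B) (blade (symdiff A B))"
proof
  fix C
  have "cl_mult p q (blade A) (blade B) C = (\<Sum>B'\<in>Pow {1..p+q}. if B' = B then
      (if symdiff A B = C then blade_coeff p A B else 0) else 0)"
  proof -
    have "cl_mult p q (blade A) (blade B) C = (\<Sum>B'\<in>Pow {1..p+q}. if symdiff A B' = C then blade B B' * blade_coeff p A B' else 0)"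
      by (simp add: cl_mult_blade_left[OF A])
    also have "\<dots> = (\<Sum>B'\<in>Pow {1..p+q}. if B' = B then
      (if symdiff A B = C then blade_coeff p A B else 0) else 0)"
      unfolding blade_def by (intro sum.cong) auto
    finally show ?thesis .
  qed
  also have "\<dots> = cl_smult (blade_coeff p A B) (blade (symdiff A B)) C"
    using B unfolding cl_smult_def blade_def by (subst sum.delta) auto
  finally show "cl_mult p q (blade A) (blade B) C = cl_smult (blade_coeff p A B) (blade (symdiff A B)) C" .
qed

lemma cl_eta_sq: "cl_eta p a * cl_eta p a = 1" unfolding cl_eta_def by auto

lemma cl_eta_cnj: "cnj (cl_eta p a) = cl_eta p a" unfolding cl_eta_def by auto

lemma blade_coeff_sq: "blade_coeff p A B * blade_coeff p A B = 1"
proof -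
  have "(\<Prod>a\<in>A \<inter> B. cl_eta p a) * (\<Prod>a\<in>A \<inter> B. cl_eta p a) = (\<Prod>a\<in>A \<inter> B. cl_eta p a * cl_eta p a)"
    by (simp add: prod.distrib)
  also have "\<dots> = 1" by (simp add: cl_eta_sq)
  finally have P: "(\<Prod>a\<in>A \<inter> B. cl_eta p a) * (\<Prod>a\<in>A \<inter> B. cl_eta p a) = 1" .
  have "((-1::complex) ^ card {(a, b). a \<in> A \<and> b \<in> B \<and> b < a}) * ((-1) ^ card {(a, b). a \<in> A \<and> b \<in> B \<and> b < a}) = 1"
    by (simp add: power_add[symmetric])
  then show ?thesis using P unfolding blade_coeff_def by (simp add: algebra_simps)
qed

lemma blade_coeff_cnj: "cnj (blade_coeff p A B) = blade_coeff p A B"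
  unfolding blade_coeff_def by (simp add: cnj_prod cl_eta_cnj)

lemma blade_coeff_nonzero: "blade_coeff p A B \<noteq> 0"
  using blade_coeff_sq[of p A B] by auto

lemma blade_coeff_empty: "blade_coeff p {} A = 1" "blade_coeff p A {} = 1"
  unfolding blade_coeff_def by auto

lemma card_inversions_sum:
  fixes A B :: "nat set"
  assumes A: "finite A" and B: "finite B"
  shows "card {(a, b). a \<in> A \<and> b \<in> B \<and> b < a} + card {(a, b). a \<in> B \<and> b \<in> A \<and> b < a} + card (A \<inter> B) = card A * card B"
proof -
  let ?S1 = "{(a, b). a \<in> A \<and> b \<in> B \<and> b < a}"
  let ?S2 = "{(a, b). a \<in> A \<and> b \<in> B \<and> a < b}"
  let ?S3 = "{(a, b). a \<in> A \<and> b \<in> B \<and> a = b}"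
  let ?T = "{(a, b). a \<in> B \<and> b \<in> A \<and> b < a}"
  have fAB: "finite (A \<times> B)" using A B by simp
  have f1: "finite ?S1" by (rule finite_subset[OF _ fAB]) auto
  have f2: "finite ?S2" by (rule finite_subset[OF _ fAB]) auto
  have f3: "finite ?S3" by (rule finite_subset[OF _ fAB]) auto
  have U: "A \<times> B = ?S1 \<union> ?S2 \<union> ?S3" by auto
  have "card (A \<times> B) = card (?S1 \<union> ?S2 \<union> ?S3)" using U by simp
  also have "\<dots> = card (?S1 \<union> ?S2) + card ?S3"
    by (rule card_Un_disjoint) (use f1 f2 f3 in auto)
  also have "card (?S1 \<union> ?S2) = card ?S1 + card ?S2"
    by (rule card_Un_disjoint) (use f1 f2 in auto)
  also have "card ?S2 = card ?T"
  proof -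
    have eq: "?S2 = (\<lambda>(x, y). (y, x)) ` ?T" by auto
    have inj: "inj_on (\<lambda>(x, y). (y, x)) ?T" unfolding inj_on_def by auto
    show ?thesis unfolding eq by (rule card_image[OF inj])
  qed
  also have "card ?S3 = card (A \<inter> B)"
  proof -
    have eq: "?S3 = (\<lambda>x. (x, x)) ` (A \<inter> B)" by auto
    have inj: "inj_on (\<lambda>x. (x, x)) (A \<inter> B)" unfolding inj_on_def by auto
    show ?thesis unfolding eq by (rule card_image[OF inj])
  qed
  finally show ?thesis by (simp add: card_cartesian_product)
qed

lemma blade_coeff_swap:
  assumes A: "finite A" and B: "finite B"
  shows "blade_coeff p A B = (-1) ^ (card A * card B - card (A \<inter> B)) * blade_coeff p B A"
proof -
  let ?c1 = "card {(a, b). a \<in> A \<and> b \<in> B \<and> b < a}"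
  let ?c2 = "card {(a, b). a \<in> B \<and> b \<in> A \<and> b < a}"
  have m: "card A * card B - card (A \<inter> B) = ?c1 + ?c2" using card_inversions_sum[OF A B] by linarith
  have "(-1::complex) ^ (?c1 + ?c2) * (-1) ^ ?c2 = (-1) ^ ?c1 * ((-1) ^ ?c2 * (-1) ^ ?c2)"
    by (simp add: power_add)
  also have "(-1::complex) ^ ?c2 * (-1) ^ ?c2 = 1" by (simp add: power_add[symmetric])
  finally have "(-1::complex) ^ (?c1 + ?c2) * (-1) ^ ?c2 = (-1) ^ ?c1" by simp
  then show ?thesis unfolding blade_coeff_def m by (simp add: Int_commute mult.assoc)
qed

lemma pseudoscalar_central:
  assumes odd: "odd (p + q)"
  shows "cl_mult p q (blade {1..p+q}) X = cl_mult p q X (blade {1..p+q})"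
  unfolding cl_mult_blade_left[OF order_refl] cl_mult_blade_right[OF order_refl]
proof (intro ext sum.cong refl)
  fix C B assume B: "B \<in> Pow {1..p+q}"
  then have "finite B" by (auto intro: finite_subset)
  then have "blade_coeff p {1..p+q} B
      = (-1) ^ (card {1..p+q} * card B - card ({1..p+q} \<inter> B)) * blade_coeff p B {1..p+q}"
    by (intro blade_coeff_swap) auto
  also have "card {1..p+q} * card B - card ({1..p+q} \<inter> B) = (p + q - 1) * card B"
    using B by (simp add: Int_absorb1 diff_mult_distrib)
  also have "(-1::complex) ^ ((p + q - 1) * card B) = 1"
    using odd by simp
  finally show "(if symdiff {1..p+q} B = C then X B * blade_coeff p {1..p+q} B else 0)
      = (if symdiff B {1..p+q} = C then X B * blade_coeff p B {1..p+q} else 0)"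
    using symdiff_commute[of "{1..p+q}" B] by simp
qed

lemma cl_dagger_carrier: "X \<in> cl_carrier p q \<Longrightarrow> cl_dagger p X \<in> cl_carrier p q"
  unfolding cl_dagger_def cl_carrier_def by auto

lemma cl_dagger_dagger: "cl_dagger p (cl_dagger p X) = X"
proof
  fix A
  have "cnj (cnj (X A) * blade_coeff p A A) * blade_coeff p A A = X A * (blade_coeff p A A * blade_coeff p A A)"
    by (simp add: blade_coeff_cnj)
  then show "cl_dagger p (cl_dagger p X) A = X A" unfolding cl_dagger_def by (simp add: blade_coeff_sq)
qed

lemma cl_scalar_dagger_mult_self:
  "cl_mult p q (cl_dagger p X) X {} = of_real (\<Sum>A\<in>Pow {1..p+q}. (cmod (X A))\<^sup>2)"
proof -
  have "cl_mult p q (cl_dagger p X) X {}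
      = (\<Sum>A\<in>Pow {1..p+q}. \<Sum>B\<in>Pow {1..p+q}. if B = A then of_real ((cmod (X A))\<^sup>2) else 0)"
    unfolding cl_mult_symdiff cl_dagger_def
  proof (intro sum.cong refl)
    fix A B
    show "(if symdiff A B = {} then cnj (X A) * blade_coeff p A A * X B * blade_coeff p A B else 0)
        = (if B = A then of_real ((cmod (X A))\<^sup>2) else 0)"
    proof (cases "B = A")
      case True
      have "cnj (X A) * blade_coeff p A A * X A * blade_coeff p A A
          = cnj (X A) * X A * (blade_coeff p A A * blade_coeff p A A)"
        by (simp add: algebra_simps)
      also have "\<dots> = of_real ((cmod (X A))\<^sup>2)"
        using complex_norm_square[of "X A"] by (simp add: blade_coeff_sq mult.commute)
      finally show ?thesis using True symdiff_self by simp
    qed (simp add: symdiff_eq_empty_iff)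
  qed
  also have "\<dots> = of_real (\<Sum>A\<in>Pow {1..p+q}. (cmod (X A))\<^sup>2)"
    by (simp add: of_real_sum)
  finally show ?thesis .
qed

lemma cl_dagger_mult_self_eq_0:
  assumes X: "X \<in> cl_carrier p q" and z: "cl_mult p q (cl_dagger p X) X = (\<lambda>A. 0)"
  shows "X = (\<lambda>A. 0)"
proof
  fix A
  have "(of_real (\<Sum>A\<in>Pow {1..p+q}. (cmod (X A))\<^sup>2) :: complex) = cl_mult p q (cl_dagger p X) X {}"
    by (rule cl_scalar_dagger_mult_self[symmetric])
  also have "\<dots> = 0"
    using z by simp
  finally have "(\<Sum>A\<in>Pow {1..p+q}. (cmod (X A))\<^sup>2) = 0"
    by (simp only: of_real_eq_0_iff)
  then have "\<forall>A\<in>Pow {1..p+q}. X A = 0"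
    by (subst (asm) sum_nonneg_eq_0_iff) auto
  then show "X A = 0"
    using X unfolding cl_carrier_def by (cases "A \<subseteq> {1..p+q}") auto
qed

lemma cl_N_half:
  assumes "p + q \<ge> 1"
  shows "cl_N p q = 2 * (cl_N p q div 2)" and "cl_N p q div 2 \<ge> 1"
proof -
  obtain k where "(p + q + 1) div 2 = Suc k" using assms by (cases "(p + q + 1) div 2") auto
  then have "cl_N p q = 2 * 2 ^ k" unfolding cl_N_def by simp
  then show "cl_N p q = 2 * (cl_N p q div 2)" and "cl_N p q div 2 \<ge> 1" by auto
qed

lemma cl_target_carrier: "cl_target p q \<subseteq> carrier_mat (cl_N p q) (cl_N p q)"
  unfolding cl_target_def by auto

section \<open>Matrix representations of the Clifford algebra\<close>

locale cl_representation =
  fixes p q :: nat and \<beta> :: "cl \<Rightarrow> complex mat"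
  assumes iso: "cl_iso p q \<beta>"
begin

abbreviation "Cl \<equiv> cl_carrier p q"
abbreviation "N \<equiv> cl_N p q"
abbreviation "cmul \<equiv> cl_mult p q"
abbreviation "\<epsilon> \<equiv> blade_coeff p"
abbreviation "Idx \<equiv> Pow {1..p+q}"

lemma beta_bij: "bij_betw \<beta> Cl (cl_target p q)" using iso unfolding cl_iso_def by auto

lemma beta_target: "X \<in> Cl \<Longrightarrow> \<beta> X \<in> cl_target p q" using beta_bij bij_betwE by blast

lemma beta_carrier: "X \<in> Cl \<Longrightarrow> \<beta> X \<in> carrier_mat N N" using beta_target cl_target_carrier by blast

lemma beta_inj: "X \<in> Cl \<Longrightarrow> Y \<in> Cl \<Longrightarrow> \<beta> X = \<beta> Y \<Longrightarrow> X = Y"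
  using beta_bij unfolding bij_betw_def inj_on_def by blast

lemma beta_surj: "T \<in> cl_target p q \<Longrightarrow> \<exists>X\<in>Cl. \<beta> X = T"
  using beta_bij unfolding bij_betw_def by (metis imageE)

lemma beta_add: "X \<in> Cl \<Longrightarrow> Y \<in> Cl \<Longrightarrow> \<beta> (\<lambda>A. X A + Y A) = \<beta> X + \<beta> Y"
  using iso unfolding cl_iso_def by auto

lemma beta_smult: "X \<in> Cl \<Longrightarrow> \<beta> (cl_smult c X) = c \<cdot>\<^sub>m \<beta> X"
  using iso unfolding cl_iso_def cl_smult_def by auto

lemma beta_mult: "X \<in> Cl \<Longrightarrow> Y \<in> Cl \<Longrightarrow> \<beta> (cmul X Y) = \<beta> X * \<beta> Y"
  using iso unfolding cl_iso_def by auto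

lemma beta_one: "\<beta> cl_one = 1\<^sub>m N"
  using iso unfolding cl_iso_def by auto

lemma beta_zero: "\<beta> (\<lambda>A. 0) = 0\<^sub>m N N"
proof -
  have "cl_smult 0 (\<lambda>A. 0) = (\<lambda>A. 0)" unfolding cl_smult_def by simp
  then have "\<beta> (\<lambda>A. 0) = 0 \<cdot>\<^sub>m \<beta> (\<lambda>A. 0)" using beta_smult[OF cl_zero_carrier, of 0] by simp
  also have "\<dots> = 0\<^sub>m N N" using beta_carrier[OF cl_zero_carrier] by (intro eq_matI) auto
  finally show ?thesis .
qed

(* Associativity is transported from matrix multiplication through the injective beta. *)
lemma cmul_assoc: assumes "X \<in> Cl" "Y \<in> Cl" "Z \<in> Cl"
  shows "cmul (cmul X Y) Z = cmul X (cmul Y Z)"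
proof (rule beta_inj[OF cl_mult_carrier cl_mult_carrier])
  have "\<beta> (cmul (cmul X Y) Z) = (\<beta> X * \<beta> Y) * \<beta> Z"
    using assms by (simp add: beta_mult cl_mult_carrier)
  also have "\<dots> = \<beta> X * (\<beta> Y * \<beta> Z)"
    using assms by (intro assoc_mult_mat[OF beta_carrier beta_carrier beta_carrier])
  also have "\<dots> = \<beta> (cmul X (cmul Y Z))"
    using assms by (simp add: beta_mult cl_mult_carrier)
  finally show "\<beta> (cmul (cmul X Y) Z) = \<beta> (cmul X (cmul Y Z))" .
qed

lemma cmul_one_left: "X \<in> Cl \<Longrightarrow> cmul cl_one X = X"
  by (rule beta_inj[OF cl_mult_carrier]) (auto simp: beta_mult cl_one_carrier beta_one left_mult_one_mat[OF beta_carrier])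

lemma cmul_one_right: "X \<in> Cl \<Longrightarrow> cmul X cl_one = X"
  by (rule beta_inj[OF cl_mult_carrier]) (auto simp: beta_mult cl_one_carrier beta_one right_mult_one_mat[OF beta_carrier])

(* Compare the two bracketings of e_A e_B e_B e_A. *)
lemma blade_coeff_cocycle:
  assumes A: "A \<subseteq> {1..p+q}" and B: "B \<subseteq> {1..p+q}"
  shows "\<epsilon> A B * \<epsilon> (symdiff A B) (symdiff A B) = \<epsilon> A A * \<epsilon> B B * \<epsilon> B A"
proof -
  let ?e = blade
  define C where "C = symdiff A B"
  have C: "C \<subseteq> {1..p+q}" unfolding C_def using A B by (rule symdiff_subset)
  have E: "{} \<subseteq> {1..p+q}" by simp
  have eA: "?e A \<in> Cl" and eB: "?e B \<in> Cl" and eC: "?e C \<in> Cl" and eE: "?e {} \<in> Cl"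
    using blade_carrier[OF A] blade_carrier[OF B] blade_carrier[OF C] blade_carrier[OF E] by auto
  have h1: "cmul (?e A) (?e B) = cl_smult (\<epsilon> A B) (?e C)" unfolding C_def by (rule cl_mult_blade_blade[OF A B])
  have h2: "cmul (?e B) (?e A) = cl_smult (\<epsilon> B A) (?e C)"
    unfolding C_def using cl_mult_blade_blade[OF B A] symdiff_commute by metis
  have "cmul (cmul (?e A) (?e B)) (cmul (?e B) (?e A)) = cl_smult (\<epsilon> B A) (cl_smult (\<epsilon> A B) (cmul (?e C) (?e C)))"
    unfolding h1 h2 cl_mult_smult_left cl_mult_smult_right ..
  also have "cmul (?e C) (?e C) = cl_smult (\<epsilon> C C) (?e {})" using cl_mult_blade_blade[OF C C] symdiff_self by simp
  finally have L: "cmul (cmul (?e A) (?e B)) (cmul (?e B) (?e A)) = cl_smult (\<epsilon> B A) (cl_smult (\<epsilon> A B) (cl_smult (\<epsilon> C C) (?e {})))" .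
  have "cmul (?e B) (cmul (?e B) (?e A)) = cmul (cmul (?e B) (?e B)) (?e A)"
    using cmul_assoc[OF eB eB eA] by simp
  also have "\<dots> = cl_smult (\<epsilon> B B) (cmul (?e {}) (?e A))"
    using cl_mult_blade_blade[OF B B] symdiff_self cl_mult_smult_left by simp
  also have "cmul (?e {}) (?e A) = ?e A" using cl_mult_blade_blade[OF E A] symdiff_empty blade_coeff_empty cl_smult_one by simp
  finally have "cmul (?e B) (cmul (?e B) (?e A)) = cl_smult (\<epsilon> B B) (?e A)" .
  then have "cmul (?e A) (cmul (?e B) (cmul (?e B) (?e A))) = cl_smult (\<epsilon> B B) (cl_smult (\<epsilon> A A) (?e {}))"
    using cl_mult_smult_right cl_mult_blade_blade[OF A A] symdiff_self by simp
  moreover have "cmul (cmul (?e A) (?e B)) (cmul (?e B) (?e A)) = cmul (?e A) (cmul (?e B) (cmul (?e B) (?e A)))"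
    using cmul_assoc[OF eA eB] cl_mult_carrier by simp
  ultimately have "cl_smult (\<epsilon> B A) (cl_smult (\<epsilon> A B) (cl_smult (\<epsilon> C C) (?e {}))) = cl_smult (\<epsilon> B B) (cl_smult (\<epsilon> A A) (?e {}))"
    using L by simp
  then have "cl_smult (\<epsilon> B A) (cl_smult (\<epsilon> A B) (cl_smult (\<epsilon> C C) (?e {}))) {} = cl_smult (\<epsilon> B B) (cl_smult (\<epsilon> A A) (?e {})) {}"
    by (rule fun_cong)
  then have "\<epsilon> A B * (\<epsilon> B A * \<epsilon> C C) = \<epsilon> B B * \<epsilon> A A"
    unfolding cl_smult_def blade_def by (simp add: algebra_simps)
  then have "\<epsilon> A B * \<epsilon> C C * (\<epsilon> B A * \<epsilon> B A) = \<epsilon> A A * \<epsilon> B B * \<epsilon> B A"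
    by (simp add: algebra_simps)
  then show ?thesis unfolding C_def using blade_coeff_sq[of p B A] by simp
qed

lemma cl_dagger_mult:
  assumes X: "X \<in> Cl" and Y: "Y \<in> Cl"
  shows "cl_dagger p (cmul X Y) = cmul (cl_dagger p Y) (cl_dagger p X)"
proof
  fix C
  have "cl_dagger p (cmul X Y) C = cnj (\<Sum>A\<in>Idx. \<Sum>B\<in>Idx. if symdiff A B = C then X A * Y B * \<epsilon> A B else 0) * \<epsilon> C C"
    unfolding cl_dagger_def cl_mult_symdiff ..
  also have "\<dots> = (\<Sum>A\<in>Idx. \<Sum>B\<in>Idx. cnj (if symdiff A B = C then X A * Y B * \<epsilon> A B else 0) * \<epsilon> C C)"
    by (simp add: cnj_sum sum_distrib_right)
  also have "\<dots> = (\<Sum>A\<in>Idx. \<Sum>B\<in>Idx. if symdiff B A = C then cnj (Y B) * \<epsilon> B B * (cnj (X A) * \<epsilon> A A) * \<epsilon> B A else 0)"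
  proof (intro sum.cong refl)
    fix A B assume A: "A \<in> Idx" and B: "B \<in> Idx"
    show "cnj (if symdiff A B = C then X A * Y B * \<epsilon> A B else 0) * \<epsilon> C C =
      (if symdiff B A = C then cnj (Y B) * \<epsilon> B B * (cnj (X A) * \<epsilon> A A) * \<epsilon> B A else 0)"
    proof (cases "symdiff A B = C")
      case True
      then have "symdiff B A = C" using symdiff_commute by metis
      moreover have "\<epsilon> A B * \<epsilon> C C = \<epsilon> A A * \<epsilon> B B * \<epsilon> B A"
        using blade_coeff_cocycle[of A B] A B True by auto
      ultimately show ?thesis using True
        by (simp add: blade_coeff_cnj)
    next
      case False
      then have "symdiff B A \<noteq> C" using symdiff_commute by metis
      then show ?thesis using False by simp
    qed
  qed
  also have "\<dots> = (\<Sum>B\<in>Idx. \<Sum>A\<in>Idx. if symdiff B A = C then cnj (Y B) * \<epsilon> B B * (cnj (X A) * \<epsilon> A A) * \<epsilon> B A else 0)"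
    by (rule sum.swap)
  also have "\<dots> = cmul (cl_dagger p Y) (cl_dagger p X) C"
    unfolding cl_dagger_def cl_mult_symdiff ..
  finally show "cl_dagger p (cmul X Y) C = cmul (cl_dagger p Y) (cl_dagger p X) C" .
qed

(* For Z = M^dagger (M X): Z^dagger Z = (M X)^dagger M M^dagger M X = 0 by normality, so Z = 0,
   and then (M X)^dagger (M X) = X^dagger Z = 0. *)
lemma normal_kernel_mult:
  assumes M: "M \<in> Cl" and nor: "cl_normal p q M" and X: "X \<in> Cl"
    and z: "cmul M (cmul M X) = (\<lambda>A. 0)"
  shows "cmul M X = (\<lambda>A. 0)"
proof -
  let ?d = "cl_dagger p"
  define W where "W = cmul M X"
  have W: "W \<in> Cl" unfolding W_def by (rule cl_mult_carrier)
  have Md: "?d M \<in> Cl" and Wd: "?d W \<in> Cl" and Xd: "?d X \<in> Cl" using M W X by (auto intro: cl_dagger_carrier)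
  have MW: "cmul M W = (\<lambda>A. 0)" using z unfolding W_def .
  define Z where "Z = cmul (?d M) W"
  have Z: "Z \<in> Cl" unfolding Z_def by (rule cl_mult_carrier)
  have dZ: "?d Z = cmul (?d W) M" unfolding Z_def using cl_dagger_mult[OF Md W] cl_dagger_dagger by simp
  have "cmul (?d Z) Z = cmul (cmul (?d W) M) Z" using dZ by simp
  also have "\<dots> = cmul (?d W) (cmul M Z)" using cmul_assoc[OF Wd M Z] .
  also have "cmul M Z = cmul (cmul M (?d M)) W" unfolding Z_def using cmul_assoc[OF M Md W] by simp
  also have "cmul M (?d M) = cmul (?d M) M" using nor unfolding cl_normal_def by simp
  also have "cmul (cmul (?d M) M) W = cmul (?d M) (cmul M W)" using cmul_assoc[OF Md M W] by simp
  finally have "cmul (?d Z) Z = (\<lambda>A. 0)" unfolding MW by (simp add: cl_mult_zero_right)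
  then have Z0: "Z = (\<lambda>A. 0)" by (rule cl_dagger_mult_self_eq_0[OF Z])
  have "?d W = cmul (?d X) (?d M)" unfolding W_def by (rule cl_dagger_mult[OF M X])
  then have "cmul (?d W) W = cmul (?d X) Z" unfolding Z_def using cmul_assoc[OF Xd Md W] by simp
  then have "cmul (?d W) W = (\<lambda>A. 0)" unfolding Z0 by (simp add: cl_mult_zero_right)
  then show ?thesis unfolding W_def[symmetric] by (rule cl_dagger_mult_self_eq_0[OF W])
qed

(* The diagonal blocks of cl_target: one block if n is even, two of size N/2 if n is odd. *)
abbreviation "block i \<equiv> odd (p + q) \<and> i < N div 2"

lemma cl_target_iff:
  "T \<in> cl_target p q \<longleftrightarrow>
     T \<in> carrier_mat N N \<and> (\<forall>i<N. \<forall>j<N. block i \<noteq> block j \<longrightarrow> T $$ (i, j) = 0)"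
  unfolding cl_target_def by auto

(* The vector v is lifted to X with beta X = block_column_mat N block v, so that beta M acts on v
   as left multiplication by M on X. *)
lemma beta_index_le_1:
  assumes M: "M \<in> Cl" and normal: "cl_normal p q M"
  shows "\<forall>v\<in>carrier_vec N. \<beta> M *\<^sub>v (\<beta> M *\<^sub>v v) = 0\<^sub>v N \<longrightarrow> \<beta> M *\<^sub>v v = 0\<^sub>v N"
proof (intro ballI impI)
  fix v :: "complex vec" assume v: "v \<in> carrier_vec N" and z: "\<beta> M *\<^sub>v (\<beta> M *\<^sub>v v) = 0\<^sub>v N"
  let ?A = "\<beta> M" and ?T = "block_column_mat N block"
  have A: "?A \<in> carrier_mat N N" by (rule beta_carrier[OF M])
  have AT: "?A * ?T w = ?T (?A *\<^sub>v w)" if "w \<in> carrier_vec N" for w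
    using beta_target[OF M] that by (intro mult_block_column_mat[OF A]) (auto simp: cl_target_iff)
  have "?T v \<in> cl_target p q" unfolding cl_target_iff block_column_mat_def by auto
  then obtain X where X: "X \<in> Cl" "\<beta> X = ?T v" using beta_surj by blast
  have "\<beta> (cmul M (cmul M X)) = ?T (?A *\<^sub>v (?A *\<^sub>v v))"
    using beta_mult[OF M cl_mult_carrier] beta_mult[OF M X(1)] X(2) AT v A by simp
  also have "\<dots> = \<beta> (\<lambda>A. 0)"
    unfolding z beta_zero by (auto simp: block_column_mat_def)
  finally have "cmul M (cmul M X) = (\<lambda>A. 0)"
    by (rule beta_inj[OF cl_mult_carrier cl_zero_carrier])
  then have "cmul M X = (\<lambda>A. 0)" by (rule normal_kernel_mult[OF M normal X(1)])
  then have "?T (?A *\<^sub>v v) = 0\<^sub>m N N"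
    using AT[OF v] beta_mult[OF M X(1)] X(2) beta_zero by simp
  then show "?A *\<^sub>v v = 0\<^sub>v N"
    by (rule block_column_mat_eq_0) (use A v in simp)
qed

lemma cl_blade_expansion:
  assumes "X \<in> Cl"
  shows "(\<lambda>C. \<Sum>A\<in>Idx. X A * blade A C) = X"
proof
  fix C
  have "(\<Sum>A\<in>Idx. X A * blade A C) = (\<Sum>A\<in>Idx. if A = C then X C else 0)"
    unfolding blade_def by (intro sum.cong) auto
  also have "\<dots> = X C" using assms unfolding cl_carrier_def by (cases "C \<in> Idx") auto
  finally show "(\<Sum>A\<in>Idx. X A * blade A C) = X C" .
qed

lemma mat_trace_beta_blade_sum:
  assumes "S \<subseteq> Idx"
  shows "(\<lambda>C. \<Sum>A\<in>S. X A * blade A C) \<in> Cl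
    \<and> mat_trace (\<beta> (\<lambda>C. \<Sum>A\<in>S. X A * blade A C)) = (\<Sum>A\<in>S. X A * mat_trace (\<beta> (blade A)))"
proof -
  have "finite S" using assms finite_subset by blast
  then show ?thesis using assms
  proof (induction S rule: finite_induct)
    case empty
    then show ?case using cl_zero_carrier beta_zero mat_trace_zero by simp
  next
    case (insert a F)
    let ?Y = "\<lambda>C. \<Sum>A\<in>F. X A * blade A C"
    have "a \<subseteq> {1..p+q}" using insert.prems by auto
    then have e: "blade a \<in> Cl" by (rule blade_carrier)
    then have c: "cl_smult (X a) (blade a) \<in> Cl" by (rule cl_smult_carrier)
    have Y: "?Y \<in> Cl" and tr: "mat_trace (\<beta> ?Y) = (\<Sum>A\<in>F. X A * mat_trace (\<beta> (blade A)))"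
      using insert by auto
    have eq: "(\<lambda>C. \<Sum>A\<in>insert a F. X A * blade A C) = (\<lambda>C. cl_smult (X a) (blade a) C + ?Y C)"
      unfolding cl_smult_def using insert by simp
    have "\<beta> (\<lambda>C. cl_smult (X a) (blade a) C + ?Y C) = X a \<cdot>\<^sub>m \<beta> (blade a) + \<beta> ?Y"
      using beta_add[OF c Y] beta_smult[OF e] by simp
    then have "mat_trace (\<beta> (\<lambda>C. cl_smult (X a) (blade a) C + ?Y C))
        = X a * mat_trace (\<beta> (blade a)) + mat_trace (\<beta> ?Y)"
      using beta_carrier[OF e] beta_carrier[OF Y]
      by (simp add: mat_trace_add[of _ N] mat_trace_smult[OF beta_carrier[OF e]])
    moreover have "(\<lambda>C. cl_smult (X a) (blade a) C + ?Y C) \<in> Cl"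
      using c Y unfolding cl_carrier_def by auto
    ultimately show ?case unfolding eq using tr insert.hyps by simp
  qed
qed

lemma mat_trace_beta_expansion:
  assumes "X \<in> Cl"
  shows "mat_trace (\<beta> X) = (\<Sum>A\<in>Idx. X A * mat_trace (\<beta> (blade A)))"
  using mat_trace_beta_blade_sum[of Idx X] unfolding cl_blade_expansion[OF assms] by simp

(* e_a e_A e_a = - eta e_A, whereas cyclicity of the trace gives
   tr beta(e_a e_A e_a) = tr beta(e_a e_a e_A) = eta tr beta(e_A). *)
lemma mat_trace_beta_anticommuting_blade:
  assumes A: "A \<subseteq> {1..p+q}" and a: "a \<in> {1..p+q}"
    and anti: "\<epsilon> {a} A = - \<epsilon> A {a}"
  shows "mat_trace (\<beta> (blade A)) = 0"
proof -
  let ?g = "blade {a}" and ?e = "blade A"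
  have a': "{a} \<subseteq> {1..p+q}" using a by auto
  have g: "?g \<in> Cl" and e: "?e \<in> Cl" using blade_carrier[OF a'] blade_carrier[OF A] by auto
  define \<eta> where "\<eta> = \<epsilon> {a} {a}"
  have gg: "cmul ?g ?g = cl_smult \<eta> cl_one"
    unfolding \<eta>_def cl_one_eq_blade using cl_mult_blade_blade[OF a' a'] symdiff_self by simp
  have ge: "cmul ?g ?e = cl_smult (-1) (cmul ?e ?g)"
    using cl_mult_blade_blade[OF a' A] cl_mult_blade_blade[OF A a'] symdiff_commute[of "{a}" A] anti
    by (simp add: cl_smult_smult)
  have "cmul (cmul ?g ?e) ?g = cl_smult (-1) (cmul (cmul ?e ?g) ?g)" unfolding ge cl_mult_smult_left ..
  also have "cmul (cmul ?e ?g) ?g = cmul ?e (cmul ?g ?g)" by (rule cmul_assoc[OF e g g])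
  also have "\<dots> = cl_smult \<eta> ?e" unfolding gg cl_mult_smult_right cmul_one_right[OF e] ..
  finally have i: "cmul (cmul ?g ?e) ?g = cl_smult (-1) (cl_smult \<eta> ?e)" .
  have "cmul ?g (cmul ?g ?e) = cmul (cmul ?g ?g) ?e" using cmul_assoc[OF g g e] by simp
  also have "\<dots> = cl_smult \<eta> ?e" unfolding gg cl_mult_smult_left cmul_one_left[OF e] ..
  finally have ii: "cmul ?g (cmul ?g ?e) = cl_smult \<eta> ?e" .
  have ge_c: "cmul ?g ?e \<in> Cl" by (rule cl_mult_carrier)
  have "mat_trace (\<beta> (cmul (cmul ?g ?e) ?g)) = mat_trace (\<beta> (cmul ?g ?e) * \<beta> ?g)"
    using beta_mult[OF ge_c g] by simp
  also have "\<dots> = mat_trace (\<beta> ?g * \<beta> (cmul ?g ?e))"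
    by (rule mat_trace_mult_comm[OF beta_carrier[OF ge_c] beta_carrier[OF g]])
  also have "\<dots> = mat_trace (\<beta> (cmul ?g (cmul ?g ?e)))" using beta_mult[OF g ge_c] by simp
  finally have "mat_trace (\<beta> (cl_smult (-1) (cl_smult \<eta> ?e))) = mat_trace (\<beta> (cl_smult \<eta> ?e))" unfolding i ii .
  then have "- (\<eta> * mat_trace (\<beta> ?e)) = \<eta> * mat_trace (\<beta> ?e)"
    using beta_smult[OF cl_smult_carrier[OF e]] beta_smult[OF e] beta_carrier[OF e]
    by (simp add: mat_trace_smult[OF smult_carrier_mat[OF beta_carrier[OF e]]] mat_trace_smult[OF beta_carrier[OF e]])
  moreover have "\<eta> \<noteq> 0" unfolding \<eta>_def by (rule blade_coeff_nonzero)
  ultimately show ?thesis by simp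
qed

lemma beta_pseudoscalar_entries:
  assumes odd: "odd (p + q)" and k: "k < N" and ij: "i < N" "j < N" "block i = block j"
  shows "\<beta> (blade {1..p+q}) $$ (k, i) = (if k = i then \<beta> (blade {1..p+q}) $$ (j, j) else 0)"
proof -
  let ?D = "\<beta> (blade {1..p+q})"
  have eO: "blade {1..p+q} \<in> Cl" by (rule blade_carrier) simp
  have "mat_unit N i j \<in> cl_target p q"
    using ij unfolding cl_target_iff mat_unit_def by auto
  then obtain X where X: "X \<in> Cl" "\<beta> X = mat_unit N i j" using beta_surj by blast
  have "?D * mat_unit N i j = mat_unit N i j * ?D"
    using beta_mult[OF eO X(1)] beta_mult[OF X(1) eO] pseudoscalar_central[OF odd, of X] X(2) by simp
  then show ?thesis
    by (rule commute_mat_unit_entry[OF beta_carrier[OF eO] ij(1,2) k])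
qed

lemma beta_pseudoscalar_square:
  "\<beta> (blade {1..p+q}) * \<beta> (blade {1..p+q}) = \<epsilon> {1..p+q} {1..p+q} \<cdot>\<^sub>m 1\<^sub>m N"
proof -
  have eO: "blade {1..p+q} \<in> Cl" by (rule blade_carrier) simp
  have "cmul (blade {1..p+q}) (blade {1..p+q}) = cl_smult (\<epsilon> {1..p+q} {1..p+q}) cl_one"
    using cl_mult_blade_blade[OF subset_refl subset_refl] symdiff_self cl_one_eq_blade by simp
  then show ?thesis
    using beta_mult[OF eO eO] beta_smult[OF cl_one_carrier] beta_one by simp
qed

lemma beta_pseudoscalar_not_scalar:
  assumes n1: "p + q \<ge> 1"
  shows "\<beta> (blade {1..p+q}) \<noteq> c \<cdot>\<^sub>m 1\<^sub>m N"
proof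
  have eO: "blade {1..p+q} \<in> Cl" by (rule blade_carrier) simp
  assume "\<beta> (blade {1..p+q}) = c \<cdot>\<^sub>m 1\<^sub>m N"
  also have "\<dots> = \<beta> (cl_smult c cl_one)" using beta_smult[OF cl_one_carrier] beta_one by simp
  finally have "blade {1..p+q} = cl_smult c cl_one"
    by (rule beta_inj[OF eO cl_smult_carrier[OF cl_one_carrier]])
  then have "blade {1..p+q} {1..p+q} = cl_smult c cl_one {1..p+q}" by simp
  moreover have "{1..p+q} \<noteq> {}" using n1 by auto
  ultimately show False unfolding blade_def cl_smult_def cl_one_def by simp
qed

(* For n odd, beta(e_1 ... e_n) commutes with all of cl_target, hence is diag(a I, b I); it
   squares to a scalar without being one, so b = -a. *)
lemma mat_trace_beta_pseudoscalar:
  assumes n1: "p + q \<ge> 1" and odd: "odd (p + q)"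
  shows "mat_trace (\<beta> (blade {1..p+q})) = 0"
proof -
  define h where "h = N div 2"
  have N: "N = 2 * h" and h1: "h \<ge> 1" using cl_N_half[OF n1] unfolding h_def by auto
  define D where "D = \<beta> (blade {1..p+q})"
  have D: "D \<in> carrier_mat N N" unfolding D_def by (rule beta_carrier, rule blade_carrier) simp
  define a where "a = D $$ (0, 0)"
  define b where "b = D $$ (h, h)"
  have entries: "D $$ (k, i) = (if k = i then (if i < h then a else b) else 0)"
    if "k < N" "i < N" for k i
  proof (cases "i < h")
    case True
    then show ?thesis
      using beta_pseudoscalar_entries[OF odd that, of 0] odd h1 N unfolding D_def a_def h_def by simp
  next
    case False
    then show ?thesis
      using beta_pseudoscalar_entries[OF odd that, of h] odd h1 N unfolding D_def b_def h_def by simp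
  qed
  have sq: "(if i < h then a * a else b * b) = \<epsilon> {1..p+q} {1..p+q}" if i: "i < N" for i
  proof -
    have "(D * D) $$ (i, i) = (\<Sum>l\<in>{0..<N}. if l = i then (if i < h then a * a else b * b) else 0)"
      unfolding mat_mult_index[OF D D i i] by (intro sum.cong refl) (auto simp: entries i)
    then show ?thesis using beta_pseudoscalar_square i unfolding D_def by simp
  qed
  have "0 < N" "h < N" using N h1 by auto
  then have "a * a = b * b" using sq[of 0] sq[of h] h1 by simp
  moreover have "a \<noteq> b"
  proof
    assume "a = b"
    then have "D = a \<cdot>\<^sub>m 1\<^sub>m N" using D by (intro eq_matI) (auto simp: entries)
    then show False using beta_pseudoscalar_not_scalar[OF n1] unfolding D_def by blast
  qed
  ultimately have "b = - a"
    by (metis add_eq_0_iff2 mult_eq_0_iff right_minus_eq square_diff_square_factored)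
  moreover have "mat_trace D = of_nat h * (a + b)"
    using D N entries by (intro mat_trace_two_scalar_blocks) auto
  ultimately show ?thesis unfolding D_def by simp
qed

(* e_A anticommutes with e_a for any a in A if |A| is even, and for any a outside A if |A| is odd. *)
lemma mat_trace_beta_blade:
  assumes n1: "p + q \<ge> 1" and A: "A \<subseteq> {1..p+q}" and ne: "A \<noteq> {}"
  shows "mat_trace (\<beta> (blade A)) = 0"
proof -
  have fA: "finite A" using A finite_subset by auto
  have cA: "card A \<ge> 1" using fA ne by (simp add: Suc_le_eq card_gt_0_iff)
  have sw: "\<epsilon> {a} A = (-1) ^ (card A - card ({a} \<inter> A)) * \<epsilon> A {a}" for a
    using blade_coeff_swap[of "{a}" A p] fA by simp
  show ?thesis
  proof (cases "even (card A)")
    case True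
    obtain a where a: "a \<in> A" using ne by auto
    have "card ({a} \<inter> A) = 1" using a by simp
    moreover have "odd (card A - 1)" using True cA by simp
    ultimately have "\<epsilon> {a} A = - \<epsilon> A {a}" using sw[of a] by simp
    then show ?thesis using mat_trace_beta_anticommuting_blade[OF A] a A by auto
  next
    case False
    show ?thesis
    proof (cases "A = {1..p+q}")
      case True
      then have "odd (p + q)" using False by simp
      then show ?thesis unfolding True by (rule mat_trace_beta_pseudoscalar[OF n1])
    next
      case False
      then obtain a where a: "a \<in> {1..p+q}" "a \<notin> A" using A by blast
      have "card ({a} \<inter> A) = 0" using a by simp
      then have "\<epsilon> {a} A = - \<epsilon> A {a}" using sw[of a] \<open>odd (card A)\<close> by simp
      then show ?thesis using mat_trace_beta_anticommuting_blade[OF A a(1)] by simp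
    qed
  qed
qed

lemma mat_trace_beta:
  assumes n1: "p + q \<ge> 1" and X: "X \<in> Cl"
  shows "mat_trace (\<beta> X) = of_nat N * X {}"
proof -
  have "mat_trace (\<beta> X) = (\<Sum>A\<in>Idx. X A * mat_trace (\<beta> (blade A)))"
    by (rule mat_trace_beta_expansion[OF X])
  also have "\<dots> = X {} * mat_trace (\<beta> (blade {})) + (\<Sum>A\<in>Idx - {{}}. X A * mat_trace (\<beta> (blade A)))"
    by (rule sum.remove) auto
  also have "(\<Sum>A\<in>Idx - {{}}. X A * mat_trace (\<beta> (blade A))) = 0"
    by (rule sum.neutral) (use mat_trace_beta_blade[OF n1] in auto)
  also have "mat_trace (\<beta> (blade {})) = of_nat N"
    unfolding cl_one_eq_blade[symmetric] beta_one by (rule mat_trace_one)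
  finally show ?thesis by simp
qed

lemma cl_Mseq_carrier: "M \<in> Cl \<Longrightarrow> cl_Mseq p q M k \<in> Cl"
  by (cases k) (simp_all add: cl_mult_carrier)

lemma beta_cl_Mseq:
  assumes n1: "p + q \<ge> 1" and M: "M \<in> Cl"
  shows "\<beta> (cl_Mseq p q M k) = fl_seq N (\<beta> M) k"
proof (induction k)
  case (Suc k)
  let ?X = "cl_Mseq p q M k"
  define c where "c = of_nat N / of_nat (Suc k) * cl_scalar ?X"
  have X: "?X \<in> Cl" by (rule cl_Mseq_carrier[OF M])
  have Y: "(\<lambda>A. ?X A + cl_smult (- c) cl_one A) \<in> Cl"
    using X cl_smult_carrier[OF cl_one_carrier] unfolding cl_carrier_def by auto
  have "c = mat_trace (fl_seq N (\<beta> M) k) / of_nat (Suc k)"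
    unfolding c_def Suc.IH[symmetric] mat_trace_beta[OF n1 X] cl_scalar_def by simp
  then have "\<beta> (\<lambda>A. ?X A + cl_smult (- c) cl_one A)
      = fl_seq N (\<beta> M) k - (mat_trace (fl_seq N (\<beta> M) k) / of_nat (Suc k)) \<cdot>\<^sub>m 1\<^sub>m N"
    using beta_add[OF X cl_smult_carrier[OF cl_one_carrier]] beta_smult[OF cl_one_carrier] beta_one
      Suc.IH beta_carrier[OF X] by (auto simp del: of_nat_Suc)
  moreover have "cl_Mseq p q M (Suc k) = cmul M (\<lambda>A. ?X A + cl_smult (- c) cl_one A)"
    unfolding c_def cl_smult_def by simp
  ultimately show ?case using beta_mult[OF M Y] by (simp del: of_nat_Suc)
qed simp

lemma cl_C_eq_fl_coeff:
  assumes n1: "p + q \<ge> 1" and M: "M \<in> Cl"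
  shows "cl_C p q M k = fl_coeff N (\<beta> M) k"
  unfolding cl_C_def fl_coeff_def beta_cl_Mseq[OF n1 M, symmetric]
    mat_trace_beta[OF n1 cl_Mseq_carrier[OF M]] cl_scalar_def
  by simp

lemma cl_rank_le: "M \<in> Cl \<Longrightarrow> cl_rank p q \<beta> M \<le> N"
  unfolding cl_rank_def by (rule vec_space.rank_le_nc[OF beta_carrier])

lemma cl_rank_zero: "cl_rank p q \<beta> (\<lambda>A. 0) = 0"
  unfolding cl_rank_def beta_zero by (rule vec_space.rank_0I)

lemma cl_rank_pos:
  assumes M: "M \<in> Cl" and "M \<noteq> (\<lambda>A. 0)"
  shows "cl_rank p q \<beta> M \<ge> 1"
  unfolding cl_rank_def using beta_inj[OF M cl_zero_carrier] beta_zero assms(2)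
  by (intro rank_pos_if_nonzero[OF beta_carrier[OF M]]) auto

lemma cl_C_above_rank:
  assumes "p + q \<ge> 1" and M: "M \<in> Cl" and "cl_normal p q M" and "cl_rank p q \<beta> M < j"
  shows "cl_C p q M j = 0"
  unfolding cl_C_eq_fl_coeff[OF assms(1) M]
  by (rule fl_coeff_above_rank[OF beta_carrier[OF M] beta_index_le_1[OF M assms(3)]])
    (use assms(4) in \<open>simp add: cl_rank_def\<close>)

lemma cl_C_rank_nonzero:
  assumes "p + q \<ge> 1" and M: "M \<in> Cl" and "cl_normal p q M" and "cl_rank p q \<beta> M \<ge> 1"
  shows "cl_C p q M (cl_rank p q \<beta> M) \<noteq> 0"
  unfolding cl_C_eq_fl_coeff[OF assms(1) M] cl_rank_def
  by (rule fl_coeff_rank_nonzero[OF beta_carrier[OF M] beta_index_le_1[OF M assms(3)]])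
    (use assms(4) in \<open>simp add: cl_rank_def\<close>)

end

theorem theorem5:
  fixes p q :: nat and M :: cl and \<beta> :: "cl \<Rightarrow> complex mat"
  assumes "p + q \<ge> 1"
    and "M \<in> cl_carrier p q"
    and "cl_normal p q M"
    and "cl_iso p q \<beta>"
  shows "(cl_C p q M (cl_N p q) \<noteq> 0 \<longrightarrow> cl_rank p q \<beta> M = cl_N p q)
    \<and> (\<forall>k\<in>{2..cl_N p q - 1}.
         (\<forall>j\<in>{k+1..cl_N p q}. cl_C p q M j = 0) \<and> cl_C p q M k \<noteq> 0
           \<longrightarrow> cl_rank p q \<beta> M = k)
    \<and> ((\<forall>j\<in>{2..cl_N p q}. cl_C p q M j = 0) \<and> M \<noteq> (\<lambda>A. 0) \<longrightarrow> cl_rank p q \<beta> M = 1)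
    \<and> (M = (\<lambda>A. 0) \<longrightarrow> cl_rank p q \<beta> M = 0)"
proof -
  interpret cl_representation p q \<beta> by unfold_locales (rule assms(4))
  note above = cl_C_above_rank[OF assms(1-3)] and at = cl_C_rank_nonzero[OF assms(1-3)]
  note rN = cl_rank_le[OF assms(2)]
  have last: "cl_rank p q \<beta> M = k"
    if "1 \<le> k" "k \<le> N" "cl_C p q M k \<noteq> 0" "\<forall>j\<in>{k+1..N}. cl_C p q M j = 0" for k
    by (rule rank_eq_last_nonzero_coeff[where c = "cl_C p q M", OF rN above at that])
  show ?thesis
  proof (intro conjI impI ballI)
    show "cl_rank p q \<beta> M = N" if "cl_C p q M N \<noteq> 0"
      using last[of N] that cl_N_half[OF assms(1)] by simp
    show "cl_rank p q \<beta> M = k"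
      if "k \<in> {2..N - 1}" "(\<forall>j\<in>{k+1..N}. cl_C p q M j = 0) \<and> cl_C p q M k \<noteq> 0" for k
      using last[of k] that diff_le_self[of N 1] by auto
    show "cl_rank p q \<beta> M = 1" if "(\<forall>j\<in>{2..N}. cl_C p q M j = 0) \<and> M \<noteq> (\<lambda>A. 0)"
      using at cl_rank_pos[OF assms(2)] rN that by (cases "cl_rank p q \<beta> M = 1") auto
  qed (simp add: cl_rank_zero)
qed

end
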